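(* Let $n \ge 0$ and let $Z = \sum_{j=1}^m P_j$ be a point cluster of degree $m$ in $\mathbb{P}^n(\mathbb{C})$. Fix row vectors $P_j \in \mathbb{C}^{n+1}$ representing the points of $Z$ with $\|P_j\|^2 = \bar{P}_j P_j^\top = 1$. Then there is a constant $c > 0$ such that for every positive definite Hermitian $(n+1)\times(n+1)$ matrix $Q$ with eigenvalues $0 < \lambda_0 \le \lambda_1 \le \dots \le \lambda_n$ we have \[ \prod_{j=1}^m \bigl(\bar{P}_j Q P_j^\top\bigr) \ge c \prod_{k=0}^n \lambda_k^{\varphi_Z(k) - \varphi_Z(k-1)}. \]
   Context: A point cluster (positive zero-cycle) of degree $m$ in $\mathbb{P}^n$ is a formal sum $Z = \sum_{j=1}^m P_j$ of (not necessarily distinct) points $P_j \in \mathbb{P}^n$. For a linear subspace $L \subseteq \mathbb{P}^n$, $Z|_L$ denotes the sum of those points of $Z$ lying in $L$ (counted with multiplicity), and $\deg$ is the number of points. For $-1 \le k \le n$, $\varphi_Z(k) = \max\{\deg Z|_L : L \subseteq \mathbb{P}^n \text{ a } k\text{-dimensional linear subspace}\}$ (the $(-1)$-dimensional subspace being empty, so $\varphi_Z(-1) = 0$). Points are written as row vectors, $\bar{P}$ denotes complex conjugation. *)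

theory Defs
  imports "Jordan_Normal_Form.Char_Poly" "HOL-Library.Complex_Order"
begin

text \<open>A k-dimensional projective linear subspace of P^n corresponds to a (k+1)-dimensional
  linear subspace of C^(n+1), i.e. the span of k+1 linearly independent vectors.\<close>

definition lin_indep_family :: "nat \<Rightarrow> nat \<Rightarrow> (nat \<Rightarrow> complex vec) \<Rightarrow> bool" where
  "lin_indep_family n k v \<longleftrightarrow>
     (\<forall>c :: nat \<Rightarrow> complex. (\<forall>i<n+1. (\<Sum>l\<le>k. c l * v l $ i) = 0) \<longrightarrow> (\<forall>l\<le>k. c l = 0))"

definition span_family :: "nat \<Rightarrow> nat \<Rightarrow> (nat \<Rightarrow> complex vec) \<Rightarrow> complex vec set" where
  "span_family n k v = {x \<in> carrier_vec (n+1). \<exists>c :: nat \<Rightarrow> complex. \<forall>i<n+1. x $ i = (\<Sum>l\<le>k. c l * v l $ i)}"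

definition proj_subspace :: "nat \<Rightarrow> nat \<Rightarrow> complex vec set \<Rightarrow> bool" where
  "proj_subspace n k L \<longleftrightarrow>
     (\<exists>v. (\<forall>l\<le>k. v l \<in> carrier_vec (n+1)) \<and> lin_indep_family n k v \<and> L = span_family n k v)"

text \<open>phi_Z(k) for the cluster Z = P_0 + ... + P_(m-1) (points counted with multiplicity
  via their indices); phi_Z(k) = 0 for k < 0.\<close>
definition phi :: "nat \<Rightarrow> nat \<Rightarrow> (nat \<Rightarrow> complex vec) \<Rightarrow> int \<Rightarrow> nat" where
  "phi n m P k = (if k < 0 then 0 else
     Max {card {j \<in> {..<m}. P j \<in> L} | L. proj_subspace n (nat k) L})"

definition hermitian_mat :: "complex mat \<Rightarrow> bool" where
  "hermitian_mat Q \<longleftrightarrow> (\<forall>i<dim_row Q. \<forall>l<dim_col Q. Q $$ (i,l) = cnj (Q $$ (l,i)))"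

definition herm_form :: "nat \<Rightarrow> complex mat \<Rightarrow> complex vec \<Rightarrow> complex" where
  "herm_form n Q x = (\<Sum>i<n+1. \<Sum>l<n+1. cnj (x $ i) * Q $$ (i,l) * x $ l)"

definition pos_def_mat :: "nat \<Rightarrow> complex mat \<Rightarrow> bool" where
  "pos_def_mat n Q \<longleftrightarrow> (\<forall>x \<in> carrier_vec (n+1). x \<noteq> 0\<^sub>v (n+1) \<longrightarrow> herm_form n Q x > 0)"

end

theory Submission
  imports Defs "Jordan_Normal_Form.Schur_Decomposition" "HOL-Analysis.Topology_Euclidean_Space"
begin

text \<open>Diagonalize \<open>Q\<close> in an orthonormal eigenbasis \<open>u\<^sub>0, \<dots>, u\<^sub>n\<close> with increasing eigenvalues, so
  that \<open>P\<^sub>j Q P\<^sub>j\<^sup>*\<close> is the \<open>\<lambda>\<close>-weighted sum of the masses \<open>|\<langle>u\<^sub>s, P\<^sub>j\<rangle>|\<^sup>2\<close>.  By compactness of the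
  unitary group there is \<open>\<delta> > 0\<close> such that for every orthonormal basis and every \<open>K \<le> n\<close> at most
  \<open>\<phi>\<^sub>Z(K - 1)\<close> of the \<open>P\<^sub>j\<close> have mass less than \<open>\<delta>\<close> on \<open>u\<^sub>K, \<dots>, u\<^sub>n\<close>: otherwise a limit basis would put
  more than \<open>\<phi>\<^sub>Z(K - 1)\<close> of the points into the \<open>(K - 1)\<close>-plane spanned by \<open>u\<^sub>0, \<dots>, u\<^sub>K\<^sub>-\<^sub>1\<close>.
  If \<open>\<sigma>\<^sub>j\<close> is the last index at which this tail mass of \<open>P\<^sub>j\<close> is still at least \<open>\<delta>\<close>, then
  \<open>P\<^sub>j Q P\<^sub>j\<^sup>* \<ge> \<delta> \<lambda>\<^sub>\<sigma>\<^sub>j\<close>, and the counting bound says that the exponents of \<open>\<Prod>\<^sub>j \<lambda>\<^sub>\<sigma>\<^sub>j\<close> sit on larger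
  eigenvalues than the jumps \<open>\<phi>\<^sub>Z(k) - \<phi>\<^sub>Z(k - 1)\<close> do.  Hence \<open>c = \<delta>\<^sup>m\<close> works.\<close>

hide_type (open) Finite_Cartesian_Product.vec

section \<open>Coordinate vectors, spans and orthonormal families\<close>

text \<open>A vector of \<open>\<complex>\<^sup>N\<close> is a function \<open>nat \<Rightarrow> complex\<close> of which only the first \<open>N\<close>
  coordinates matter, and a family of vectors is indexed by its first argument.\<close>

definition cinner :: "nat \<Rightarrow> (nat \<Rightarrow> complex) \<Rightarrow> (nat \<Rightarrow> complex) \<Rightarrow> complex" where
  "cinner N x y = (\<Sum>i<N. cnj (x i) * y i)"

definition lin_span :: "nat \<Rightarrow> (nat \<Rightarrow> nat \<Rightarrow> complex) \<Rightarrow> nat \<Rightarrow> (nat \<Rightarrow> complex) set" where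
  "lin_span N v K = {x. \<exists>c. \<forall>i<N. x i = (\<Sum>s<K. c s * v s i)}"

definition orthonormal :: "nat \<Rightarrow> (nat \<Rightarrow> nat \<Rightarrow> complex) \<Rightarrow> nat \<Rightarrow> bool" where
  "orthonormal N v K \<longleftrightarrow> (\<forall>a<K. \<forall>b<K. cinner N (v a) (v b) = (if a = b then 1 else 0))"

lemma lin_span_add: "x \<in> lin_span N v K \<Longrightarrow> y \<in> lin_span N v K \<Longrightarrow> (\<lambda>i. x i + y i) \<in> lin_span N v K"
proof -
  assume "x \<in> lin_span N v K" "y \<in> lin_span N v K"
  then obtain c d where "\<forall>i<N. x i = (\<Sum>s<K. c s * v s i)" "\<forall>i<N. y i = (\<Sum>s<K. d s * v s i)"
    unfolding lin_span_def by auto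
  note cd = this
  have "\<forall>i<N. x i + y i = (\<Sum>s<K. (c s + d s) * v s i)"
  proof (intro allI impI)
    fix i assume i: "i < N"
    have "x i + y i = (\<Sum>s<K. c s * v s i) + (\<Sum>s<K. d s * v s i)" using cd i by metis
    also have "\<dots> = (\<Sum>s<K. (c s + d s) * v s i)" by (simp add: sum.distrib distrib_right)
    finally show "x i + y i = (\<Sum>s<K. (c s + d s) * v s i)" .
  qed
  then show ?thesis unfolding lin_span_def mem_Collect_eq by (rule exI[of _ "\<lambda>s. c s + d s"])
qed

lemma lin_span_scale: "x \<in> lin_span N v K \<Longrightarrow> (\<lambda>i. a * x i) \<in> lin_span N v K"
proof -
  assume "x \<in> lin_span N v K"
  then obtain c where "\<forall>i<N. x i = (\<Sum>s<K. c s * v s i)"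
    unfolding lin_span_def by auto
  note cd = this
  have "\<forall>i<N. a * x i = (\<Sum>s<K. (a * c s) * v s i)"
  proof (intro allI impI)
    fix i assume i: "i < N"
    have "a * x i = a * (\<Sum>s<K. c s * v s i)" using cd i by metis
    also have "\<dots> = (\<Sum>s<K. (a * c s) * v s i)" by (simp add: sum_distrib_left mult.assoc)
    finally show "a * x i = (\<Sum>s<K. (a * c s) * v s i)" .
  qed
  then show ?thesis unfolding lin_span_def mem_Collect_eq by (rule exI[of _ "\<lambda>s. a * c s"])
qed

lemma lin_span_zero: "(\<lambda>i. 0) \<in> lin_span N v K"
  unfolding lin_span_def by (rule CollectI, rule exI[of _ "\<lambda>_. 0"], simp)

lemma lin_span_cong: "y \<in> lin_span N v K \<Longrightarrow> (\<forall>i<N. x i = y i) \<Longrightarrow> x \<in> lin_span N v K"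
  unfolding lin_span_def by auto

lemma lin_span_sum: "finite S \<Longrightarrow> (\<forall>t\<in>S. f t \<in> lin_span N v K) \<Longrightarrow> (\<lambda>i. \<Sum>t\<in>S. f t i) \<in> lin_span N v K"
proof (induction S rule: finite_induct)
  case empty
  then show ?case using lin_span_zero by simp
next
  case (insert a S)
  then have "(\<lambda>i. f a i + (\<Sum>t\<in>S. f t i)) \<in> lin_span N v K"
    using lin_span_add[of "f a" N v K "\<lambda>i. \<Sum>t\<in>S. f t i"] by auto
  then show ?case using insert by simp
qed

lemma lin_span_generator: "s < K \<Longrightarrow> v s \<in> lin_span N v K"
proof -
  assume s: "s < K"
  have "\<forall>i<N. v s i = (\<Sum>t<K. (if t = s then 1 else 0) * v t i)"
  proof (intro allI impI)
    fix i
    have "(\<Sum>t<K. (if t = s then 1 else 0) * v t i) = (\<Sum>t<K. (if t = s then v s i else 0))"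
      by (rule sum.cong) auto
    also have "\<dots> = v s i" using s by simp
    finally show "v s i = (\<Sum>t<K. (if t = s then 1 else 0) * v t i)" by simp
  qed
  then show ?thesis unfolding lin_span_def by (intro CollectI exI[of _ "\<lambda>t. if t = s then 1 else 0"])
qed

lemma lin_span_subset: "(\<forall>s<K. v s \<in> lin_span N w K') \<Longrightarrow> lin_span N v K \<subseteq> lin_span N w K'"
proof
  fix x assume h: "\<forall>s<K. v s \<in> lin_span N w K'" and x: "x \<in> lin_span N v K"
  then obtain c where c: "\<forall>i<N. x i = (\<Sum>s<K. c s * v s i)" unfolding lin_span_def by auto
  have "(\<lambda>i. \<Sum>s<K. c s * v s i) \<in> lin_span N w K'"
    by (rule lin_span_sum, simp, intro ballI lin_span_scale, use h in auto)
  then show "x \<in> lin_span N w K'" using c by (rule lin_span_cong)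
qed

lemma lin_span_mono: "K \<le> K' \<Longrightarrow> lin_span N v K \<subseteq> lin_span N v K'"
  by (rule lin_span_subset, auto intro: lin_span_generator)

lemma lin_span_family_cong: assumes h: "(\<forall>s<K. \<forall>i<N. v s i = w s i)" shows "lin_span N v K = lin_span N w K"
proof -
  have "\<And>c i. i < N \<Longrightarrow> (\<Sum>s<K. c s * v s i) = (\<Sum>s<K. c s * w s i)"
    using h by (intro sum.cong) auto
  then show ?thesis unfolding lin_span_def by auto
qed

lemma cinner_lincomb_right: "cinner N x (\<lambda>i. \<Sum>s<K. c s * v s i) = (\<Sum>s<K. c s * cinner N x (v s))"
proof -
  have "cinner N x (\<lambda>i. \<Sum>s<K. c s * v s i) = (\<Sum>i<N. \<Sum>s<K. c s * (cnj (x i) * v s i))"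
    unfolding cinner_def by (simp add: sum_distrib_left mult_ac)
  also have "\<dots> = (\<Sum>s<K. \<Sum>i<N. c s * (cnj (x i) * v s i))"
    by (rule sum.swap)
  also have "\<dots> = (\<Sum>s<K. c s * cinner N x (v s))"
    unfolding cinner_def by (simp add: sum_distrib_left)
  finally show ?thesis .
qed

lemma cinner_cong_right: "(\<forall>i<N. y i = z i) \<Longrightarrow> cinner N x y = cinner N x z"
  unfolding cinner_def by auto

lemma cinner_commute: "cinner N y x = cnj (cinner N x y)"
  unfolding cinner_def by (simp add: mult.commute)

lemma cinner_add_right: "cinner N x (\<lambda>i. y i + z i) = cinner N x y + cinner N x z"
  unfolding cinner_def by (simp add: distrib_left sum.distrib)

lemma cinner_diff_right: "cinner N x (\<lambda>i. y i - z i) = cinner N x y - cinner N x z"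
  unfolding cinner_def by (simp add: right_diff_distrib sum_subtractf)

lemma cinner_scale_right: "cinner N x (\<lambda>i. a * y i) = a * cinner N x y"
  unfolding cinner_def by (simp add: sum_distrib_left mult_ac)

lemma cinner_scale_left: "cinner N (\<lambda>i. a * x i) y = cnj a * cinner N x y"
  unfolding cinner_def by (simp add: sum_distrib_left mult_ac)

lemma cinner_self: "cinner N x x = complex_of_real (\<Sum>i<N. (cmod (x i))^2)"
  unfolding cinner_def of_real_sum by (rule sum.cong, simp, metis complex_norm_square mult.commute)

lemma orthonormal_coeff: assumes o: "orthonormal N u K'" and K: "K \<le> K'" and s: "s < K'"
  and x: "\<forall>i<N. x i = (\<Sum>t<K. c t * u t i)"
  shows "cinner N (u s) x = (if s < K then c s else 0)"
proof -
  have "cinner N (u s) x = (\<Sum>t<K. c t * cinner N (u s) (u t))"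
    by (simp only: cinner_cong_right[OF x] cinner_lincomb_right)
  also have "\<dots> = (\<Sum>t<K. c t * (if s = t then 1 else 0))"
    using o s K unfolding orthonormal_def by (intro sum.cong) auto
  also have "\<dots> = (\<Sum>t<K. if t = s then c t else 0)"
    by (rule sum.cong) auto
  also have "\<dots> = (if s < K then c s else 0)"
    using sum.delta[of "{..<K}" s c] by simp
  finally show ?thesis .
qed

lemma orthonormal_perp: assumes "orthonormal N u K'" "K \<le> s" "s < K'" "x \<in> lin_span N u K" shows "cinner N (u s) x = 0"
proof -
  obtain c where c: "\<forall>i<N. x i = (\<Sum>t<K. c t * u t i)" using assms(4) unfolding lin_span_def by auto
  show ?thesis using orthonormal_coeff[OF assms(1) _ assms(3) c] assms(2,3) by auto
qed

lemma orthonormal_expansion: assumes o: "orthonormal N u K'" and K: "K \<le> K'" and x: "x \<in> lin_span N u K"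
  shows "\<forall>i<N. x i = (\<Sum>t<K. cinner N (u t) x * u t i)"
proof -
  obtain c where c: "\<forall>i<N. x i = (\<Sum>t<K. c t * u t i)" using x unfolding lin_span_def by auto
  have ct: "\<forall>t<K. cinner N (u t) x = c t" using orthonormal_coeff[OF o K _ c] K by auto
  show ?thesis
  proof (intro allI impI)
    fix i assume i: "i < N"
    have "(\<Sum>t<K. cinner N (u t) x * u t i) = (\<Sum>t<K. c t * u t i)"
      using ct by (intro sum.cong) auto
    then show "x i = (\<Sum>t<K. cinner N (u t) x * u t i)" using c i by metis
  qed
qed

lemma orthonormal_insert:
  assumes o: "orthonormal N u k" and vv: "cinner N v v = 1" and uv: "\<forall>a<k. cinner N (u a) v = 0"
  shows "orthonormal N (u(k := v)) (Suc k)"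
  unfolding orthonormal_def
proof (intro allI impI)
  fix a b assume a: "a < Suc k" and b: "b < Suc k"
  consider "a < k" "b < k" | "a < k" "b = k" | "a = k" "b < k" | "a = k" "b = k"
    using a b by linarith
  then show "cinner N ((u(k := v)) a) ((u(k := v)) b) = (if a = b then 1 else 0)"
  proof cases
    case 1
    then show ?thesis using o unfolding orthonormal_def by simp
  next
    case 2
    then show ?thesis using uv by simp
  next
    case 3
    then show ?thesis using uv cinner_commute[of N "u b" v] by simp
  next
    case 4
    then show ?thesis using vv by simp
  qed
qed

text \<open>One Gram--Schmidt step: normalize the component of \<open>p\<close> orthogonal to \<open>u\<^sub>0, \<dots>, u\<^sub>k\<^sub>-\<^sub>1\<close>.\<close>

lemma orthonormal_extend:
  assumes o: "orthonormal N u k" and p: "p \<notin> lin_span N u k"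
  obtains v where "orthonormal N (u(k := v)) (Suc k)" "p \<in> lin_span N (u(k := v)) (Suc k)"
    "v \<in> lin_span N (u(k := p)) (Suc k)" "cinner N v p \<noteq> 0"
proof -
  define w where "w = (\<lambda>i. \<Sum>s<k. cinner N (u s) p * u s i)"
  define r where "r = (\<lambda>i. p i - w i)"
  have w: "w \<in> lin_span N u k"
    unfolding w_def lin_span_def mem_Collect_eq by (rule exI[of _ "\<lambda>s. cinner N (u s) p"]) simp
  have r_perp: "\<forall>a<k. cinner N (u a) r = 0"
  proof (intro allI impI)
    fix a assume a: "a < k"
    have "cinner N (u a) w = cinner N (u a) p"
      using orthonormal_coeff[OF o order.refl a, of w "\<lambda>s. cinner N (u s) p"] a unfolding w_def by simp
    then show "cinner N (u a) r = 0" unfolding r_def cinner_diff_right by simp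
  qed
  obtain i0 where i0: "i0 < N" "r i0 \<noteq> 0"
  proof (rule ccontr)
    assume "\<not> thesis"
    with that have "\<forall>i<N. p i = w i" unfolding r_def by auto
    with w p show False using lin_span_cong by blast
  qed
  define S where "S = (\<Sum>i<N. (cmod (r i))\<^sup>2)"
  define \<rho> where "\<rho> = complex_of_real (sqrt S)"
  have S: "S > 0" unfolding S_def by (rule sum_pos2[of _ i0]) (use i0 in auto)
  then have rho: "\<rho> \<noteq> 0" unfolding \<rho>_def by simp
  have "\<rho> * cnj \<rho> = complex_of_real S"
    using S unfolding \<rho>_def by (simp flip: of_real_mult)
  then have rr: "cinner N r r = \<rho> * cnj \<rho>"
    using cinner_self[of N r] unfolding S_def by simp
  define v where "v = (\<lambda>i. inverse \<rho> * r i)"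
  have vr: "cinner N v r = \<rho>"
    unfolding v_def cinner_scale_left rr using rho by (simp add: field_simps)
  have vv: "cinner N v v = 1"
    using vr rho unfolding v_def[of] cinner_scale_right by (simp add: v_def)
  have uv: "\<forall>a<k. cinner N (u a) v = 0"
    using r_perp unfolding v_def cinner_scale_right by simp
  show thesis
  proof
    show o': "orthonormal N (u(k := v)) (Suc k)" by (rule orthonormal_insert[OF o vv uv])
    have "\<forall>i<N. p i = (\<Sum>s<Suc k. ((\<lambda>s. cinner N (u s) p)(k := \<rho>)) s * (u(k := v)) s i)"
      using rho by (simp add: w_def r_def v_def mult.assoc[symmetric])
    then show "p \<in> lin_span N (u(k := v)) (Suc k)"
      unfolding lin_span_def by blast
    have "\<forall>i<N. v i = (\<Sum>s<Suc k. ((\<lambda>s. - inverse \<rho> * cinner N (u s) p)(k := inverse \<rho>)) s * (u(k := p)) s i)"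
      by (simp add: v_def r_def w_def right_diff_distrib sum_distrib_left mult.assoc sum_negf)
    then show "v \<in> lin_span N (u(k := p)) (Suc k)"
      unfolding lin_span_def by blast
    have "cinner N v w = 0"
      using orthonormal_perp[OF o', of k k w] w lin_span_family_cong[of k N u "u(k := v)"] by simp
    moreover have "cinner N v p = cinner N v (\<lambda>i. w i + r i)"
      by (rule cinner_cong_right) (simp add: r_def)
    ultimately show "cinner N v p \<noteq> 0" using vr rho cinner_add_right by simp
  qed
qed

lemma independent_notin_lin_span:
  assumes indep: "\<forall>c. (\<forall>i<N. (\<Sum>s<N. c s * p s i) = 0) \<longrightarrow> (\<forall>s<N. c s = 0)" and k: "k < N"
  shows "p k \<notin> lin_span N p k"
proof
  assume "p k \<in> lin_span N p k"
  then obtain c where c: "\<forall>i<N. p k i = (\<Sum>s<k. c s * p s i)" unfolding lin_span_def by auto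
  define c' where "c' = (\<lambda>s. if s < k then c s else if s = k then -1 else (0::complex))"
  have "\<forall>i<N. (\<Sum>s<N. c' s * p s i) = 0"
  proof (intro allI impI)
    fix i assume i: "i < N"
    have "(\<Sum>s<N. c' s * p s i) = (\<Sum>s<Suc k. c' s * p s i)"
      using k by (intro sum.mono_neutral_right) (auto simp: c'_def)
    also have "\<dots> = (\<Sum>s<k. c s * p s i) - p k i"
      by (simp add: c'_def)
    finally show "(\<Sum>s<N. c' s * p s i) = 0" using c i by simp
  qed
  then have "c' k = 0" using indep k by blast
  then show False unfolding c'_def by simp
qed

lemma gram_schmidt_orthonormalization:
  assumes indep: "\<forall>c. (\<forall>i<N. (\<Sum>s<N. c s * p s i) = 0) \<longrightarrow> (\<forall>s<N. c s = 0)" and "k \<le> N"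
  shows "\<exists>u. orthonormal N u k \<and>
    (\<forall>j<k. p j \<in> lin_span N u (Suc j) \<and> u j \<in> lin_span N p (Suc j) \<and> cinner N (u j) (p j) \<noteq> 0)"
  using \<open>k \<le> N\<close>
proof (induction k)
  case 0
  show ?case unfolding orthonormal_def by simp
next
  case (Suc k)
  then obtain u where o: "orthonormal N u k" and
    props: "\<forall>j<k. p j \<in> lin_span N u (Suc j) \<and> u j \<in> lin_span N p (Suc j) \<and> cinner N (u j) (p j) \<noteq> 0"
    by auto
  have up: "lin_span N u k \<subseteq> lin_span N p k"
  proof (rule lin_span_subset, intro allI impI)
    fix s assume "s < k"
    then show "u s \<in> lin_span N p k" using props lin_span_mono[of "Suc s" k N p] by auto
  qed
  then have "p k \<notin> lin_span N u k"
    using independent_notin_lin_span[OF indep] Suc.prems by auto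
  then obtain v where o': "orthonormal N (u(k := v)) (Suc k)"
    and pv: "p k \<in> lin_span N (u(k := v)) (Suc k)" and vp: "v \<in> lin_span N (u(k := p k)) (Suc k)"
    and vpk: "cinner N v (p k) \<noteq> 0"
    by (rule orthonormal_extend[OF o])
  have "lin_span N (u(k := p k)) (Suc k) \<subseteq> lin_span N p (Suc k)"
  proof (rule lin_span_subset, intro allI impI)
    fix s assume s: "s < Suc k"
    show "(u(k := p k)) s \<in> lin_span N p (Suc k)"
    proof (cases "s = k")
      case True
      then show ?thesis by (simp add: lin_span_generator)
    next
      case False
      then show ?thesis using s props lin_span_mono[of "Suc s" "Suc k" N p] by auto
    qed
  qed
  with vp have vp': "v \<in> lin_span N p (Suc k)" by blast
  have "\<And>j. j \<le> k \<Longrightarrow> lin_span N (u(k := v)) j = lin_span N u j"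
    by (rule lin_span_family_cong) auto
  then have "\<forall>j<Suc k. p j \<in> lin_span N (u(k := v)) (Suc j) \<and> (u(k := v)) j \<in> lin_span N p (Suc j) \<and>
      cinner N ((u(k := v)) j) (p j) \<noteq> 0"
    using props pv vp' vpk by (auto simp: less_Suc_eq)
  with o' show ?case by blast
qed

section \<open>Orthonormal eigenbases of Hermitian matrices\<close>

lemma mat_mult_entry: "A \<in> carrier_mat N N \<Longrightarrow> B \<in> carrier_mat N N \<Longrightarrow> i < N \<Longrightarrow> j < N \<Longrightarrow>
  (A * B) $$ (i,j) = (\<Sum>l<N. A $$ (i,l) * B $$ (l,j))"
  by (simp add: scalar_prod_def atLeast0LessThan)

lemma mat_vec_entry: "A \<in> carrier_mat N N \<Longrightarrow> v \<in> carrier_vec N \<Longrightarrow> i < N \<Longrightarrow>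
  (A *\<^sub>v v) $ i = (\<Sum>l<N. A $$ (i,l) * v $ l)"
  by (simp add: scalar_prod_def atLeast0LessThan)

lemma prod_list_upt_lessThan: "prod_list (map f [0..<N]) = (\<Prod>k<N. f k)"
  by (induction N) (auto simp: lessThan_Suc mult.commute)

definition mat_apply :: "nat \<Rightarrow> complex mat \<Rightarrow> (nat \<Rightarrow> complex) \<Rightarrow> (nat \<Rightarrow> complex)" where
  "mat_apply N Q x = (\<lambda>i. \<Sum>l<N. Q $$ (i,l) * x l)"

lemma mat_apply_lincomb: assumes "\<forall>l<N. x l = (\<Sum>s<K. c s * v s l)"
  shows "mat_apply N Q x i = (\<Sum>s<K. c s * mat_apply N Q (v s) i)"
proof -
  have "mat_apply N Q x i = (\<Sum>l<N. Q $$ (i,l) * (\<Sum>s<K. c s * v s l))"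
    unfolding mat_apply_def using assms by (intro sum.cong) auto
  also have "\<dots> = (\<Sum>l<N. \<Sum>s<K. c s * (Q $$ (i,l) * v s l))"
    by (simp add: sum_distrib_left mult_ac)
  also have "\<dots> = (\<Sum>s<K. \<Sum>l<N. c s * (Q $$ (i,l) * v s l))"
    by (rule sum.swap)
  also have "\<dots> = (\<Sum>s<K. c s * mat_apply N Q (v s) i)"
    unfolding mat_apply_def by (simp add: sum_distrib_left)
  finally show ?thesis .
qed

lemma mat_apply_lin_span: assumes x: "x \<in> lin_span N v K" and h: "\<forall>s<K. mat_apply N Q (v s) \<in> lin_span N w K'"
  shows "mat_apply N Q x \<in> lin_span N w K'"
proof -
  obtain c where c: "\<forall>l<N. x l = (\<Sum>s<K. c s * v s l)" using x unfolding lin_span_def by auto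
  have "(\<lambda>i. \<Sum>s<K. c s * mat_apply N Q (v s) i) \<in> lin_span N w K'"
    by (rule lin_span_sum, simp, intro ballI lin_span_scale, use h in auto)
  moreover have "\<forall>i<N. mat_apply N Q x i = (\<Sum>s<K. c s * mat_apply N Q (v s) i)"
    using mat_apply_lincomb[OF c] by blast
  ultimately show ?thesis using lin_span_cong by blast
qed

lemma hermitian_cinner_mat_apply: assumes Q: "Q \<in> carrier_mat N N" and h: "hermitian_mat Q"
  shows "cinner N x (mat_apply N Q y) = cinner N (mat_apply N Q x) y"
proof -
  have hQ: "\<And>i l. i < N \<Longrightarrow> l < N \<Longrightarrow> cnj (Q $$ (l,i)) = Q $$ (i,l)"
    using h Q unfolding hermitian_mat_def by (metis carrier_matD(1) carrier_matD(2) complex_cnj_cnj)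
  have "cinner N x (mat_apply N Q y) = (\<Sum>i<N. \<Sum>l<N. cnj (x i) * Q $$ (i,l) * y l)"
    unfolding cinner_def mat_apply_def by (simp add: sum_distrib_left mult_ac)
  also have "\<dots> = (\<Sum>l<N. \<Sum>i<N. cnj (x i) * Q $$ (i,l) * y l)"
    by (rule sum.swap)
  also have "\<dots> = (\<Sum>l<N. \<Sum>i<N. cnj (Q $$ (l,i)) * cnj (x i) * y l)"
    using hQ by (intro sum.cong refl) (simp add: mult_ac)
  also have "\<dots> = cinner N (mat_apply N Q x) y"
    unfolding cinner_def mat_apply_def by (simp add: sum_distrib_left mult_ac)
  finally show ?thesis .
qed

definition orthonormal_basis :: "nat \<Rightarrow> (nat \<Rightarrow> nat \<Rightarrow> complex) \<Rightarrow> bool" where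
  "orthonormal_basis N u \<longleftrightarrow> orthonormal N u N \<and>
     (\<forall>i<N. \<forall>i'<N. (\<Sum>s<N. u s i * cnj (u s i')) = (if i = i' then 1 else 0))"

lemma orthonormal_basisI:
  assumes o: "orthonormal N u N" and span: "\<And>x. x \<in> lin_span N u N"
  shows "orthonormal_basis N u"
  unfolding orthonormal_basis_def
proof (intro conjI o allI impI)
  fix i i' assume i: "i < N" and i': "i' < N"
  define e where "e = (\<lambda>l. if l = i' then 1 else (0::complex))"
  have "\<And>t. cinner N (u t) e = cnj (u t i')"
    unfolding cinner_def e_def using i' by (simp add: if_distrib cong: if_cong)
  then have "e i = (\<Sum>t<N. cnj (u t i') * u t i)"
    using orthonormal_expansion[OF o order.refl span[of e]] i by simp
  then show "(\<Sum>s<N. u s i * cnj (u s i')) = (if i = i' then 1 else 0)"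
    unfolding e_def by (simp add: mult.commute)
qed

lemma orthonormal_basis_expansion:
  assumes "orthonormal_basis N u" "i < N"
  shows "x i = (\<Sum>s<N. cinner N (u s) x * u s i)"
proof -
  have "(\<Sum>s<N. cinner N (u s) x * u s i) = (\<Sum>s<N. \<Sum>l<N. x l * (u s i * cnj (u s l)))"
    unfolding cinner_def by (simp add: sum_distrib_left sum_distrib_right mult_ac)
  also have "\<dots> = (\<Sum>l<N. \<Sum>s<N. x l * (u s i * cnj (u s l)))" by (rule sum.swap)
  also have "\<dots> = (\<Sum>l<N. if l = i then x i else 0)"
    using assms unfolding orthonormal_basis_def by (intro sum.cong refl) (simp add: sum_distrib_left[symmetric])
  finally show ?thesis using assms(2) by simp
qed

lemma schur_triangular_basis:
  fixes Q :: "complex mat" and e :: "nat \<Rightarrow> complex"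
  assumes Q: "Q \<in> carrier_mat N N" and cp: "char_poly Q = (\<Prod>k<N. [:- e k, 1:])"
  obtains p :: "nat \<Rightarrow> nat \<Rightarrow> complex" and B :: "nat \<Rightarrow> nat \<Rightarrow> complex"
  where "\<forall>c. (\<forall>i<N. (\<Sum>s<N. c s * p s i) = 0) \<longrightarrow> (\<forall>s<N. c s = 0)"
    and "\<And>x. x \<in> lin_span N p N"
    and "\<And>k i. k < N \<Longrightarrow> i < N \<Longrightarrow> mat_apply N Q (p k) i = (\<Sum>l<Suc k. B l k * p l i)"
    and "\<And>k. k < N \<Longrightarrow> B k k = e k"
proof -
  define es where "es = map e [0..<N]"
  have cp': "char_poly Q = (\<Prod>e\<leftarrow>es. [:- e, 1:])"
    unfolding cp es_def map_map o_def prod_list_upt_lessThan ..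
  obtain T Pm Pi where sd: "schur_decomposition Q es = (T,Pm,Pi)"
    by (cases "schur_decomposition Q es") auto
  from schur_decomposition[OF Q cp' sd]
  have sw: "similar_mat_wit Q T Pm Pi" and ut: "upper_triangular T" and dg: "diag_mat T = es" by auto
  have dimQ: "dim_row Q = N" using Q by auto
  from sw have T: "T \<in> carrier_mat N N" and Pm: "Pm \<in> carrier_mat N N" and Pi: "Pi \<in> carrier_mat N N"
    and PP: "Pm * Pi = 1\<^sub>m N" and PP': "Pi * Pm = 1\<^sub>m N" and QPBP: "Q = Pm * T * Pi"
    unfolding similar_mat_wit_def Let_def dimQ by auto
  define p where "p = (\<lambda>k i. Pm $$ (i,k))"
  show thesis
  proof (rule that[of p "\<lambda>l k. T $$ (l,k)"])
    show "\<forall>c. (\<forall>i<N. (\<Sum>s<N. c s * p s i) = 0) \<longrightarrow> (\<forall>s<N. c s = 0)"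
    proof (intro allI impI)
      fix c s assume h: "\<forall>i<N. (\<Sum>s<N. c s * p s i) = 0" and s: "s < N"
      define cv where "cv = Matrix.vec N c"
      have cv: "cv \<in> carrier_vec N" unfolding cv_def by simp
      have "Pm *\<^sub>v cv = 0\<^sub>v N"
      proof (rule eq_vecI)
        fix i assume "i < dim_vec (0\<^sub>v N :: complex Matrix.vec)"
        then have i: "i < N" by simp
        have "(Pm *\<^sub>v cv) $ i = (\<Sum>l<N. Pm $$ (i,l) * cv $ l)" using mat_vec_entry[OF Pm cv i] .
        also have "\<dots> = (\<Sum>l<N. c l * p l i)" unfolding cv_def p_def by (intro sum.cong) auto
        also have "\<dots> = 0" using h i by simp
        finally show "(Pm *\<^sub>v cv) $ i = 0\<^sub>v N $ i" using i by simp
      qed (use Pm in simp)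
      then have "Pi *\<^sub>v (Pm *\<^sub>v cv) = 0\<^sub>v N" using Pi by (intro eq_vecI) (auto simp: scalar_prod_def)
      then have "cv = 0\<^sub>v N" using assoc_mult_mat_vec[OF Pi Pm cv] PP' cv by simp
      then show "c s = 0" using s unfolding cv_def by (metis index_vec index_zero_vec(1))
    qed
    show "x \<in> lin_span N p N" for x
    proof -
      define xv where "xv = Matrix.vec N x"
      have xv: "xv \<in> carrier_vec N" unfolding xv_def by simp
      define yv where "yv = Pi *\<^sub>v xv"
      have yv: "yv \<in> carrier_vec N" unfolding yv_def using mult_mat_vec_carrier[OF Pi xv] by simp
      have "Pm *\<^sub>v yv = xv" unfolding yv_def using assoc_mult_mat_vec[OF Pm Pi xv] PP xv by simp
      then have "\<forall>i<N. x i = (\<Sum>s<N. yv $ s * p s i)"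
        using mat_vec_entry[OF Pm yv] unfolding xv_def p_def by (auto simp: mult.commute)
      then show "x \<in> lin_span N p N" unfolding lin_span_def mem_Collect_eq by (rule exI[of _ "\<lambda>s. yv $ s"])
    qed
    have QP: "Q * Pm = Pm * T"
    proof -
      have "Q * Pm = Pm * T * Pi * Pm" using QPBP by simp
      also have "\<dots> = Pm * T * (Pi * Pm)" by (rule assoc_mult_mat[of "Pm * T" N N Pi N Pm N]) (use Pm T Pi in auto)
      also have "\<dots> = Pm * T" using PP' Pm T by simp
      finally show ?thesis .
    qed
    show "mat_apply N Q (p k) i = (\<Sum>l<Suc k. T $$ (l,k) * p l i)" if k: "k < N" and i: "i < N" for k i
    proof -
      have "mat_apply N Q (p k) i = (Q * Pm) $$ (i,k)"
        unfolding mat_apply_def p_def using mat_mult_entry[OF Q Pm i k] by simp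
      also have "\<dots> = (\<Sum>l<N. Pm $$ (i,l) * T $$ (l,k))"
        unfolding QP using mat_mult_entry[OF Pm T i k] .
      also have "\<dots> = (\<Sum>l<Suc k. Pm $$ (i,l) * T $$ (l,k))"
        using k ut T unfolding upper_triangular_def by (intro sum.mono_neutral_right) auto
      finally show ?thesis
        unfolding p_def by (simp add: mult.commute)
    qed
    show "T $$ (k,k) = e k" if k: "k < N" for k
    proof -
      have "diag_mat T ! k = T $$ (k,k)" unfolding diag_mat_def using T k by auto
      then show ?thesis using dg k unfolding es_def by simp
    qed
  qed
qed

text \<open>Gram--Schmidt preserves triangularity, and for a Hermitian matrix a triangular
  orthonormal frame is diagonalizing.\<close>

lemma hermitian_triangular_eigenvectors:
  assumes Q: "Q \<in> carrier_mat N N" and herm: "hermitian_mat Q" and o: "orthonormal N u N"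
    and tri: "\<And>k. k < N \<Longrightarrow> mat_apply N Q (u k) \<in> lin_span N u (Suc k)"
    and k: "k < N" and i: "i < N"
  shows "mat_apply N Q (u k) i = cinner N (u k) (mat_apply N Q (u k)) * u k i"
proof -
  have "mat_apply N Q (u k) i = (\<Sum>t<Suc k. cinner N (u t) (mat_apply N Q (u k)) * u t i)"
    using orthonormal_expansion[OF o _ tri[OF k]] k i by simp
  also have "\<dots> = (\<Sum>t<k. cinner N (u t) (mat_apply N Q (u k)) * u t i) +
      cinner N (u k) (mat_apply N Q (u k)) * u k i"
    by simp
  also have "(\<Sum>t<k. cinner N (u t) (mat_apply N Q (u k)) * u t i) = 0"
  proof (rule sum.neutral, intro ballI)
    fix t assume t: "t \<in> {..<k}"
    have "cinner N (u t) (mat_apply N Q (u k)) = cnj (cinner N (u k) (mat_apply N Q (u t)))"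
      using hermitian_cinner_mat_apply[OF Q herm] cinner_commute by metis
    also have "cinner N (u k) (mat_apply N Q (u t)) = 0"
      using orthonormal_perp[OF o _ k tri[of t]] t k by simp
    finally show "cinner N (u t) (mat_apply N Q (u k)) * u t i = 0" by simp
  qed
  finally show ?thesis by simp
qed

lemma triangular_diagonal_is_eigenvalue:
  assumes o: "orthonormal N u N" and k: "k < N"
    and pu: "\<And>l. l \<le> k \<Longrightarrow> p l \<in> lin_span N u (Suc l)" and nz: "cinner N (u k) (p k) \<noteq> 0"
    and eig: "\<And>t i. t < N \<Longrightarrow> i < N \<Longrightarrow> mat_apply N Q (u t) i = \<mu> t * u t i"
    and tri: "\<And>i. i < N \<Longrightarrow> mat_apply N Q (p k) i = (\<Sum>l<Suc k. B l k * p l i)"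
  shows "\<mu> k = B k k"
proof -
  define \<alpha> where "\<alpha> = (\<lambda>t. cinner N (u t) (p k))"
  have pk: "\<forall>l<N. p k l = (\<Sum>t<Suc k. \<alpha> t * u t l)"
    using orthonormal_expansion[OF o _ pu[of k]] k unfolding \<alpha>_def by simp
  have "cinner N (u k) (mat_apply N Q (p k)) = cinner N (u k) (\<lambda>i. \<Sum>t<Suc k. \<alpha> t * (\<mu> t * u t i))"
  proof (rule cinner_cong_right, intro allI impI)
    fix i assume i: "i < N"
    have "mat_apply N Q (p k) i = (\<Sum>t<Suc k. \<alpha> t * mat_apply N Q (u t) i)" using mat_apply_lincomb[OF pk] .
    also have "\<dots> = (\<Sum>t<Suc k. \<alpha> t * (\<mu> t * u t i))"
      using eig k i by (intro sum.cong) auto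
    finally show "mat_apply N Q (p k) i = (\<Sum>t<Suc k. \<alpha> t * (\<mu> t * u t i))" .
  qed
  also have "\<dots> = \<alpha> k * \<mu> k"
    using orthonormal_coeff[OF o _ k, of "Suc k" "\<lambda>i. \<Sum>t<Suc k. \<alpha> t * (\<mu> t * u t i)" "\<lambda>t. \<alpha> t * \<mu> t"] k
    by (simp add: mult.assoc)
  finally have e1: "cinner N (u k) (mat_apply N Q (p k)) = \<alpha> k * \<mu> k" .
  have "cinner N (u k) (mat_apply N Q (p k)) = cinner N (u k) (\<lambda>i. \<Sum>l<Suc k. B l k * p l i)"
    by (rule cinner_cong_right) (use tri in auto)
  also have "\<dots> = (\<Sum>l<Suc k. B l k * cinner N (u k) (p l))" by (rule cinner_lincomb_right)
  also have "\<dots> = (\<Sum>l<k. B l k * cinner N (u k) (p l)) + B k k * \<alpha> k"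
    unfolding \<alpha>_def by simp
  also have "(\<Sum>l<k. B l k * cinner N (u k) (p l)) = 0"
  proof (rule sum.neutral, intro ballI)
    fix l assume l: "l \<in> {..<k}"
    have "cinner N (u k) (p l) = 0" using orthonormal_perp[OF o _ k pu[of l]] l by simp
    then show "B l k * cinner N (u k) (p l) = 0" by simp
  qed
  finally have "cinner N (u k) (mat_apply N Q (p k)) = B k k * \<alpha> k" by simp
  with e1 nz show ?thesis unfolding \<alpha>_def by simp
qed

lemma hermitian_orthonormal_eigenbasis:
  fixes Q :: "complex mat" and e :: "nat \<Rightarrow> complex"
  assumes Q: "Q \<in> carrier_mat N N" and herm: "hermitian_mat Q"
    and cp: "char_poly Q = (\<Prod>k<N. [:- e k, 1:])"
  obtains u where "orthonormal_basis N u"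
    and "\<And>k i. k < N \<Longrightarrow> i < N \<Longrightarrow> mat_apply N Q (u k) i = e k * u k i"
proof -
  obtain p B where indep: "\<forall>c. (\<forall>i<N. (\<Sum>s<N. c s * p s i) = 0) \<longrightarrow> (\<forall>s<N. c s = 0)"
    and p_span: "\<And>x. x \<in> lin_span N p N"
    and tri: "\<And>k i. k < N \<Longrightarrow> i < N \<Longrightarrow> mat_apply N Q (p k) i = (\<Sum>l<Suc k. B l k * p l i)"
    and diag: "\<And>k. k < N \<Longrightarrow> B k k = e k"
    using schur_triangular_basis[OF Q cp] by blast
  obtain u where o: "orthonormal N u N" and
    props: "\<forall>j<N. p j \<in> lin_span N u (Suc j) \<and> u j \<in> lin_span N p (Suc j) \<and> cinner N (u j) (p j) \<noteq> 0"
    using gram_schmidt_orthonormalization[OF indep order.refl] by auto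
  have pu: "\<And>k K. k < K \<Longrightarrow> K \<le> N \<Longrightarrow> p k \<in> lin_span N u K"
    using props lin_span_mono by (meson Suc_leI less_le_trans subsetD)
  have up: "\<And>k K. k < K \<Longrightarrow> K \<le> N \<Longrightarrow> u k \<in> lin_span N p K"
    using props lin_span_mono by (meson Suc_leI less_le_trans subsetD)
  have Qp: "mat_apply N Q (p k) \<in> lin_span N p (Suc k)" if k: "k < N" for k
  proof -
    have "(\<lambda>i. \<Sum>l<Suc k. B l k * p l i) \<in> lin_span N p (Suc k)"
      unfolding lin_span_def mem_Collect_eq by (rule exI[of _ "\<lambda>l. B l k"]) simp
    then show ?thesis using tri[OF k] lin_span_cong by blast
  qed
  have Qu: "mat_apply N Q (u k) \<in> lin_span N u (Suc k)" if k: "k < N" for k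
  proof (rule mat_apply_lin_span[of _ N p "Suc k"])
    show "u k \<in> lin_span N p (Suc k)" using up k by simp
    have "lin_span N p (Suc k) \<subseteq> lin_span N u (Suc k)"
      by (rule lin_span_subset) (use pu k in auto)
    moreover have "mat_apply N Q (p s) \<in> lin_span N p (Suc k)" if "s < Suc k" for s
      using Qp[of s] lin_span_mono[of "Suc s" "Suc k" N p] that k by auto
    ultimately show "\<forall>s<Suc k. mat_apply N Q (p s) \<in> lin_span N u (Suc k)" by blast
  qed
  define \<mu> where "\<mu> = (\<lambda>k. cinner N (u k) (mat_apply N Q (u k)))"
  have eig: "mat_apply N Q (u k) i = \<mu> k * u k i" if "k < N" "i < N" for k i
    unfolding \<mu>_def by (rule hermitian_triangular_eigenvectors[OF Q herm o Qu that])
  show thesis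
  proof
    show "orthonormal_basis N u"
    proof (rule orthonormal_basisI[OF o])
      show "x \<in> lin_span N u N" for x
        using p_span[of x] lin_span_subset[of N p N u N] pu by auto
    qed
    show "mat_apply N Q (u k) i = e k * u k i" if "k < N" "i < N" for k i
    proof -
      have "\<mu> k = B k k"
      proof (rule triangular_diagonal_is_eigenvalue[where p = p and B = B and Q = Q, OF o \<open>k < N\<close>])
        show "p l \<in> lin_span N u (Suc l)" if "l \<le> k" for l
          using props that \<open>k < N\<close> by auto
        show "cinner N (u k) (p k) \<noteq> 0" using props \<open>k < N\<close> by auto
        show "mat_apply N Q (u t) i = \<mu> t * u t i" if "t < N" "i < N" for t i
          using eig that .
        show "mat_apply N Q (p k) i = (\<Sum>l<Suc k. B l k * p l i)" if "i < N" for i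
          using tri \<open>k < N\<close> that .
      qed
      then show ?thesis using eig[OF that] diag[OF \<open>k < N\<close>] by simp
    qed
  qed
qed

lemma hermitian_form_eigen_expansion:
  fixes lam :: "nat \<Rightarrow> real" and u :: "nat \<Rightarrow> nat \<Rightarrow> complex"
  assumes ob: "orthonormal_basis N u"
    and eig: "\<And>k i. k < N \<Longrightarrow> i < N \<Longrightarrow> mat_apply N Q (u k) i = complex_of_real (lam k) * u k i"
  shows "(\<Sum>i<N. \<Sum>l<N. cnj (x i) * Q $$ (i,l) * x l) =
    complex_of_real (\<Sum>s<N. lam s * (cmod (cinner N (u s) x))\<^sup>2)"
proof -
  define c where "c = (\<lambda>t. cinner N (u t) x)"
  have "(\<Sum>i<N. \<Sum>l<N. cnj (x i) * Q $$ (i,l) * x l) = cinner N x (mat_apply N Q x)"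
    unfolding cinner_def mat_apply_def by (simp add: sum_distrib_left mult_ac)
  also have "\<dots> = cinner N x (\<lambda>i. \<Sum>t<N. c t * (lam t * u t i))"
  proof (rule cinner_cong_right, intro allI impI)
    fix i assume i: "i < N"
    have "\<forall>l<N. x l = (\<Sum>t<N. c t * u t l)"
      using orthonormal_basis_expansion[OF ob] unfolding c_def by blast
    then have "mat_apply N Q x i = (\<Sum>t<N. c t * mat_apply N Q (u t) i)" by (rule mat_apply_lincomb)
    also have "\<dots> = (\<Sum>t<N. c t * (lam t * u t i))" using eig i by (intro sum.cong) auto
    finally show "mat_apply N Q x i = (\<Sum>t<N. c t * (lam t * u t i))" .
  qed
  also have "\<dots> = (\<Sum>t<N. c t * lam t * cinner N x (u t))"
    using cinner_lincomb_right[where N=N and x=x and c="\<lambda>t. c t * lam t" and K=N and v=u]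
    by (simp add: mult.assoc)
  also have "\<dots> = (\<Sum>t<N. complex_of_real (lam t * (cmod (c t))\<^sup>2))"
  proof (rule sum.cong, simp)
    fix t
    have "cinner N x (u t) = cnj (c t)" unfolding c_def by (rule cinner_commute)
    then have "c t * lam t * cinner N x (u t) = complex_of_real (lam t) * (c t * cnj (c t))"
      by (simp add: mult_ac)
    also have "\<dots> = complex_of_real (lam t * (cmod (c t))\<^sup>2)"
      by (simp add: complex_norm_square[symmetric])
    finally show "c t * lam t * cinner N x (u t) = complex_of_real (lam t * (cmod (c t))\<^sup>2)" .
  qed
  finally show ?thesis unfolding c_def of_real_sum .
qed

section \<open>The function \<open>\<phi>\<^sub>Z\<close>\<close>

definition incidence_counts :: "nat \<Rightarrow> nat \<Rightarrow> (nat \<Rightarrow> complex vec) \<Rightarrow> nat \<Rightarrow> nat set" where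
  "incidence_counts n m P k = {card {j \<in> {..<m}. P j \<in> L} | L. proj_subspace n k L}"

lemma finite_incidence_counts: "finite (incidence_counts n m P k)"
proof -
  have "incidence_counts n m P k \<subseteq> {..m}" unfolding incidence_counts_def
    by (auto intro!: card_mono[of "{..<m}", simplified])
  then show ?thesis using finite_subset by blast
qed

lemma phi_of_nat: "phi n m P (int k) = Max (incidence_counts n m P k)"
  unfolding phi_def incidence_counts_def by simp

lemma card_le_phi: "proj_subspace n k L \<Longrightarrow> card {j \<in> {..<m}. P j \<in> L} \<le> phi n m P (int k)"
  unfolding phi_of_nat by (rule Max_ge[OF finite_incidence_counts]) (auto simp: incidence_counts_def)

lemma coordinate_proj_subspace: assumes "k \<le> n"
  shows "proj_subspace n k (span_family n k (\<lambda>l. unit_vec (n+1) l))"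
  unfolding proj_subspace_def
proof (intro exI conjI)
  show "\<forall>l\<le>k. unit_vec (n+1) l \<in> carrier_vec (n+1)" by simp
  show "lin_indep_family n k (\<lambda>l. unit_vec (n+1) l)"
    unfolding lin_indep_family_def
  proof (intro allI impI)
    fix c :: "nat \<Rightarrow> complex" and l
    assume h: "\<forall>i<n+1. (\<Sum>l\<le>k. c l * unit_vec (n+1) l $ i) = 0" and l: "l \<le> k"
    have li: "l < n+1" using l assms by simp
    have "(\<Sum>l'\<le>k. c l' * unit_vec (n+1) l' $ l) = (\<Sum>l'\<le>k. if l' = l then c l else 0)"
      using li assms by (intro sum.cong) auto
    also have "\<dots> = c l" using l by simp
    finally show "c l = 0" using h li by simp
  qed
qed simp

lemma incidence_counts_nonempty: "k \<le> n \<Longrightarrow> incidence_counts n m P k \<noteq> {}"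
  using coordinate_proj_subspace unfolding incidence_counts_def by blast

lemma phi_attained: "k \<le> n \<Longrightarrow> \<exists>L. proj_subspace n k L \<and> phi n m P (int k) = card {j \<in> {..<m}. P j \<in> L}"
proof -
  assume k: "k \<le> n"
  have "Max (incidence_counts n m P k) \<in> incidence_counts n m P k" by (rule Max_in[OF finite_incidence_counts incidence_counts_nonempty[OF k]])
  then show ?thesis unfolding phi_of_nat incidence_counts_def by auto
qed

lemma phi_le_degree: "k \<le> n \<Longrightarrow> phi n m P (int k) \<le> m"
proof -
  assume k: "k \<le> n"
  then obtain L where "phi n m P (int k) = card {j \<in> {..<m}. P j \<in> L}" using phi_attained by blast
  also have "\<dots> \<le> card {..<m}" by (rule card_mono) auto
  finally show ?thesis by simp
qed

lemma phi_ambient: assumes "\<forall>j<m. P j \<in> carrier_vec (n+1)" shows "phi n m P (int n) = m"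
proof -
  have "span_family n n (\<lambda>l. unit_vec (n+1) l) = carrier_vec (n+1)"
  proof
    show "span_family n n (\<lambda>l. unit_vec (n + 1) l) \<subseteq> carrier_vec (n + 1)"
      unfolding span_family_def by auto
    show "carrier_vec (n + 1) \<subseteq> span_family n n (\<lambda>l. unit_vec (n + 1) l)"
    proof
      fix x :: "complex Matrix.vec" assume x: "x \<in> carrier_vec (n+1)"
      have "\<forall>i<n+1. x $ i = (\<Sum>l\<le>n. x $ l * unit_vec (n+1) l $ i)"
      proof (intro allI impI)
        fix i assume i: "i < n+1"
        have "(\<Sum>l\<le>n. x $ l * unit_vec (n+1) l $ i) = (\<Sum>l\<le>n. if l = i then x $ i else 0)"
          using i by (intro sum.cong) auto
        also have "\<dots> = x $ i" using i by simp
        finally show "x $ i = (\<Sum>l\<le>n. x $ l * unit_vec (n+1) l $ i)" by simp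
      qed
      then show "x \<in> span_family n n (\<lambda>l. unit_vec (n + 1) l)"
        unfolding span_family_def mem_Collect_eq using x by (intro conjI exI[of _ "\<lambda>l. x $ l"])
    qed
  qed
  then have "proj_subspace n n (carrier_vec (n+1))" using coordinate_proj_subspace[of n n] by simp
  then have "card {j \<in> {..<m}. P j \<in> carrier_vec (n+1)} \<le> phi n m P (int n)" by (rule card_le_phi)
  moreover have "{j \<in> {..<m}. P j \<in> carrier_vec (n+1)} = {..<m}" using assms by auto
  ultimately show ?thesis using phi_le_degree[of n n m P] by simp
qed

lemma exists_notin_span_family: assumes k: "k < n" and v: "\<forall>l\<le>k. v l \<in> carrier_vec (n+1)"
  shows "\<exists>e. e \<in> carrier_vec (n+1) \<and> e \<notin> span_family n k v"
proof (rule ccontr)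
  assume "\<not> ?thesis"
  then have "\<forall>i<n+1. unit_vec (n+1) i \<in> span_family n k v" by auto
  then have "\<forall>i<n+1. \<exists>c. \<forall>a<n+1. unit_vec (n+1) i $ a = (\<Sum>l\<le>k. c l * v l $ a)"
    unfolding span_family_def by auto
  then obtain c where c: "\<forall>i<n+1. \<forall>a<n+1. unit_vec (n+1) i $ a = (\<Sum>l\<le>k. c i l * v l $ a)"
    by metis
  define V where "V = Matrix.mat (n+1) (n+1) (\<lambda>(a,l). if l \<le> k then v l $ a else 0)"
  define C where "C = Matrix.mat (n+1) (n+1) (\<lambda>(l,i). if l \<le> k then c i l else 0)"
  have V: "V \<in> carrier_mat (n+1) (n+1)" and C: "C \<in> carrier_mat (n+1) (n+1)"
    unfolding V_def C_def by auto
  have "V * C = 1\<^sub>m (n+1)"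
  proof (rule eq_matI)
    fix a i assume a: "a < dim_row (1\<^sub>m (n+1) :: complex mat)" and i: "i < dim_col (1\<^sub>m (n+1) :: complex mat)"
    then have a: "a < n+1" and i: "i < n+1" by auto
    have "(V * C) $$ (a,i) = (\<Sum>l<n+1. V $$ (a,l) * C $$ (l,i))" using mat_mult_entry[OF V C a i] .
    also have "\<dots> = (\<Sum>l<n+1. if l \<le> k then c i l * v l $ a else 0)"
      unfolding V_def C_def using a i by (intro sum.cong) auto
    also have "\<dots> = (\<Sum>l\<in>{..k}. c i l * v l $ a)"
      using k by (subst sum.inter_filter[symmetric]) (auto intro!: sum.cong)
    also have "\<dots> = unit_vec (n+1) i $ a" using c a i by simp
    also have "\<dots> = 1\<^sub>m (n+1) $$ (a,i)" using a i by simp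
    finally show "(V * C) $$ (a,i) = 1\<^sub>m (n+1) $$ (a,i)" .
  qed (use V C in auto)
  then have CV: "C * V = 1\<^sub>m (n+1)" using mat_mult_left_right_inverse[OF V C] by simp
  have "(C * V) $$ (n,n) = (\<Sum>l<n+1. C $$ (n,l) * V $$ (l,n))" using mat_mult_entry[OF C V] by simp
  also have "\<dots> = 0" unfolding V_def using k by (intro sum.neutral) auto
  finally show False using CV by simp
qed

lemma lin_indep_family_extend:
  assumes li: "lin_indep_family n k v" and e: "e \<in> carrier_vec (n+1)" and en: "e \<notin> span_family n k v"
  shows "lin_indep_family n (Suc k) (v(Suc k := e))"
  unfolding lin_indep_family_def
proof (intro allI impI)
  fix c :: "nat \<Rightarrow> complex" and l
  assume h: "\<forall>i<n+1. (\<Sum>l\<le>Suc k. c l * (v(Suc k := e)) l $ i) = 0" and l: "l \<le> Suc k"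
  have h': "\<forall>i<n+1. (\<Sum>l\<le>k. c l * v l $ i) + c (Suc k) * e $ i = 0"
    using h by (simp add: atMost_Suc add.commute)
  have cS: "c (Suc k) = 0"
  proof (rule ccontr)
    assume cn: "c (Suc k) \<noteq> 0"
    have "\<forall>i<n+1. e $ i = (\<Sum>l\<le>k. (- c l / c (Suc k)) * v l $ i)"
    proof (intro allI impI)
      fix i assume i: "i < n+1"
      have "c (Suc k) * e $ i = - (\<Sum>l\<le>k. c l * v l $ i)" using h' i by (simp add: eq_neg_iff_add_eq_0 add.commute)
      then have "e $ i = - (\<Sum>l\<le>k. c l * v l $ i) / c (Suc k)" using cn by (simp add: field_simps)
      also have "\<dots> = (\<Sum>l\<le>k. (- c l / c (Suc k)) * v l $ i)"
        by (simp add: sum_divide_distrib sum_negf)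
      finally show "e $ i = (\<Sum>l\<le>k. (- c l / c (Suc k)) * v l $ i)" .
    qed
    then have "e \<in> span_family n k v" unfolding span_family_def mem_Collect_eq
      using e by (intro conjI exI[of _ "\<lambda>l. - c l / c (Suc k)"])
    then show False using en by simp
  qed
  then have "\<forall>i<n+1. (\<Sum>l\<le>k. c l * v l $ i) = 0" using h' by simp
  then have "\<forall>l\<le>k. c l = 0" using li unfolding lin_indep_family_def by blast
  then show "c l = 0" using cS l by (cases "l = Suc k") auto
qed

lemma span_family_extend_subset: "span_family n k v \<subseteq> span_family n (Suc k) (v(Suc k := e))"
proof
  fix x assume "x \<in> span_family n k v"
  then obtain c where x: "x \<in> carrier_vec (n+1)" and c: "\<forall>i<n+1. x $ i = (\<Sum>l\<le>k. c l * v l $ i)"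
    unfolding span_family_def by auto
  have "\<forall>i<n+1. x $ i = (\<Sum>l\<le>Suc k. (c(Suc k := 0)) l * (v(Suc k := e)) l $ i)"
  proof (intro allI impI)
    fix i assume i: "i < n+1"
    have "(\<Sum>l\<le>Suc k. (c(Suc k := 0)) l * (v(Suc k := e)) l $ i) = (\<Sum>l\<le>k. c l * v l $ i)"
      by (simp add: atMost_Suc)
    then show "x $ i = (\<Sum>l\<le>Suc k. (c(Suc k := 0)) l * (v(Suc k := e)) l $ i)" using c i by simp
  qed
  then show "x \<in> span_family n (Suc k) (v(Suc k := e))" unfolding span_family_def mem_Collect_eq
    using x by (intro conjI exI[of _ "c(Suc k := 0)"])
qed

lemma proj_subspace_extend:
  assumes k: "k < n" and L: "proj_subspace n k L"
  obtains L' where "proj_subspace n (Suc k) L'" and "L \<subseteq> L'"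
proof -
  from L obtain v where v: "\<forall>l\<le>k. v l \<in> carrier_vec (n+1)" and li: "lin_indep_family n k v"
    and Lv: "L = span_family n k v" unfolding proj_subspace_def by auto
  obtain e where e: "e \<in> carrier_vec (n+1)" and en: "e \<notin> span_family n k v"
    using exists_notin_span_family[OF k v] by auto
  have "\<forall>l\<le>Suc k. (v(Suc k := e)) l \<in> carrier_vec (n+1)" using v e by (auto simp: le_Suc_eq)
  with lin_indep_family_extend[OF li e en] have "proj_subspace n (Suc k) (span_family n (Suc k) (v(Suc k := e)))"
    unfolding proj_subspace_def by blast
  moreover have "L \<subseteq> span_family n (Suc k) (v(Suc k := e))"
    unfolding Lv by (rule span_family_extend_subset)
  ultimately show thesis by (rule that)
qed

lemma phi_Suc_mono:
  assumes k: "k < n"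
  shows "phi n m P (int k) \<le> phi n m P (int (Suc k))"
proof -
  obtain L where L: "proj_subspace n k L" and eq: "phi n m P (int k) = card {j \<in> {..<m}. P j \<in> L}"
    using phi_attained k by (meson less_imp_le)
  obtain L' where L': "proj_subspace n (Suc k) L'" and LL': "L \<subseteq> L'"
    by (rule proj_subspace_extend[OF k L])
  have "card {j \<in> {..<m}. P j \<in> L} \<le> card {j \<in> {..<m}. P j \<in> L'}"
    using LL' by (intro card_mono) auto
  also have "\<dots> \<le> phi n m P (int (Suc k))" by (rule card_le_phi[OF L'])
  finally show ?thesis using eq by simp
qed

lemma phi_telescope:
  assumes "K \<le> Suc n"
  shows "(\<Sum>k<K. phi n m P (int k) - phi n m P (int k - 1)) = (if K = 0 then 0 else phi n m P (int (K-1)))"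
  using assms
proof (induction K)
  case 0
  then show ?case by simp
next
  case (Suc K)
  have IH: "(\<Sum>k<K. phi n m P (int k) - phi n m P (int k - 1)) = (if K = 0 then 0 else phi n m P (int (K-1)))"
    using Suc by simp
  show ?case
  proof (cases "K = 0")
    case True
    then show ?thesis by (simp add: phi_def)
  next
    case False
    have e: "int K - 1 = int (K-1)" using False by simp
    have mono: "phi n m P (int (K-1)) \<le> phi n m P (int (Suc (K-1)))"
      using phi_Suc_mono[of "K-1" n m P] Suc.prems False by simp
    have "Suc (K-1) = K" using False by simp
    then show ?thesis using IH False mono unfolding e by simp
  qed
qed

section \<open>Majorization of products of powers\<close>

text \<open>Shifting exponent mass towards larger (positive) \<open>\<lambda>\<close> can only increase the product; in the
  induction the surplus of \<open>b\<close> over \<open>a\<close> is charged at a bound \<open>y\<close> for the \<open>\<lambda>\<close>s seen so far.\<close>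

lemma prod_power_le_times_power:
  fixes lam :: "nat \<Rightarrow> real" and a b :: "nat \<Rightarrow> nat"
  assumes pos: "\<forall>k<NN. 0 < lam k" and mono: "\<forall>k<NN. \<forall>l<NN. k \<le> l \<longrightarrow> lam k \<le> lam l"
  shows "N \<le> NN \<Longrightarrow> (\<forall>K\<le>N. (\<Sum>k<K. a k) \<le> (\<Sum>k<K. b k)) \<Longrightarrow> (\<forall>k<N. lam k \<le> y) \<Longrightarrow> 0 < y \<Longrightarrow>
    (\<Prod>k<N. lam k ^ b k) \<le> (\<Prod>k<N. lam k ^ a k) * y ^ ((\<Sum>k<N. b k) - (\<Sum>k<N. a k))"
proof (induction N arbitrary: y)
  case 0
  then show ?case by simp
next
  case (Suc N)
  have NN: "N < NN" using Suc by simp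
  have lN: "0 < lam N" using pos NN by simp
  have IH: "(\<Prod>k<N. lam k ^ b k) \<le> (\<Prod>k<N. lam k ^ a k) * lam N ^ ((\<Sum>k<N. b k) - (\<Sum>k<N. a k))"
    by (rule Suc.IH) (use Suc.prems NN mono lN in auto)
  define A where "A = (\<Sum>k<N. a k)"
  define B where "B = (\<Sum>k<N. b k)"
  have AB: "A \<le> B" using Suc.prems unfolding A_def B_def by auto
  have AB1: "A + a N \<le> B + b N" using Suc.prems(2) unfolding A_def B_def by (auto dest: spec[of _ "Suc N"])
  define D where "D = (B + b N) - (A + a N)"
  have ex: "B - A + b N = a N + D" unfolding D_def using AB AB1 by simp
  have pa: "0 \<le> (\<Prod>k<N. lam k ^ a k)" using pos NN by (intro prod_nonneg) (auto intro: zero_le_power less_imp_le)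
  have yN: "lam N \<le> y" using Suc.prems by simp
  have "(\<Prod>k<Suc N. lam k ^ b k) = (\<Prod>k<N. lam k ^ b k) * lam N ^ b N" by simp
  also have "\<dots> \<le> (\<Prod>k<N. lam k ^ a k) * lam N ^ (B - A) * lam N ^ b N"
    using IH lN unfolding A_def B_def by (intro mult_right_mono) auto
  also have "\<dots> = (\<Prod>k<N. lam k ^ a k) * lam N ^ a N * lam N ^ D"
    using ex by (simp add: power_add[symmetric] mult.assoc)
  also have "\<dots> \<le> (\<Prod>k<N. lam k ^ a k) * lam N ^ a N * y ^ D"
    using pa lN yN by (intro mult_left_mono power_mono) auto
  also have "\<dots> = (\<Prod>k<Suc N. lam k ^ a k) * y ^ ((\<Sum>k<Suc N. b k) - (\<Sum>k<Suc N. a k))"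
    unfolding D_def A_def B_def by simp
  finally show ?case .
qed

lemma prod_power_le_of_partial_sums:
  fixes lam :: "nat \<Rightarrow> real" and a b :: "nat \<Rightarrow> nat"
  assumes pos: "\<forall>k<NN. 0 < lam k" and mono: "\<forall>k<NN. \<forall>l<NN. k \<le> l \<longrightarrow> lam k \<le> lam l"
    and part: "\<forall>K\<le>NN. (\<Sum>k<K. a k) \<le> (\<Sum>k<K. b k)"
    and tot: "(\<Sum>k<NN. a k) = (\<Sum>k<NN. b k)"
  shows "(\<Prod>k<NN. lam k ^ b k) \<le> (\<Prod>k<NN. lam k ^ a k)"
proof -
  define y where "y = (\<Sum>k<NN. lam k) + 1"
  have "\<forall>k<NN. lam k \<le> y"
  proof (intro allI impI)
    fix k assume k: "k < NN"
    have "lam k \<le> (\<Sum>k<NN. lam k)"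
      using k pos by (intro member_le_sum) auto
    then show "lam k \<le> y" unfolding y_def by simp
  qed
  moreover have "0 < y" unfolding y_def using pos by (smt (verit) sum_nonneg lessThan_iff)
  ultimately show ?thesis using prod_power_le_times_power[OF pos mono order.refl part, of y] tot by simp
qed


lemma prod_eq_prod_power_card_fibres:
  fixes f :: "nat \<Rightarrow> real" and g :: "nat \<Rightarrow> nat"
  shows "\<forall>j<m. g j < N \<Longrightarrow> (\<Prod>j<m. f (g j)) = (\<Prod>k<N. f k ^ card {j\<in>{..<m}. g j = k})"
proof (induction m)
  case 0
  then show ?case by simp
next
  case (Suc m)
  have gm: "g m < N" using Suc.prems by simp
  have card: "\<And>k. card {j\<in>{..<Suc m}. g j = k} = card {j\<in>{..<m}. g j = k} + (if g m = k then 1 else 0)"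
  proof -
    fix k
    show "card {j\<in>{..<Suc m}. g j = k} = card {j\<in>{..<m}. g j = k} + (if g m = k then 1 else 0)"
    proof (cases "g m = k")
      case True
      then have "{j\<in>{..<Suc m}. g j = k} = insert m {j\<in>{..<m}. g j = k}" by auto
      then show ?thesis using True by simp
    next
      case False
      then have "{j\<in>{..<Suc m}. g j = k} = {j\<in>{..<m}. g j = k}" by (auto simp: less_Suc_eq)
      then show ?thesis using False by simp
    qed
  qed
  have "(\<Prod>j<Suc m. f (g j)) = (\<Prod>k<N. f k ^ card {j\<in>{..<m}. g j = k}) * f (g m)"
    using Suc by simp
  also have "f (g m) = (\<Prod>k<N. f k ^ (if g m = k then 1 else 0))"
  proof -
    have "(\<Prod>k<N. f k ^ (if g m = k then 1 else 0)) = (\<Prod>k<N. if k = g m then f k else 1)"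
      by (rule prod.cong) auto
    also have "\<dots> = f (g m)" using gm by simp
    finally show ?thesis by simp
  qed
  also have "(\<Prod>k<N. f k ^ card {j\<in>{..<m}. g j = k}) * (\<Prod>k<N. f k ^ (if g m = k then 1 else 0)) =
     (\<Prod>k<N. f k ^ card {j\<in>{..<Suc m}. g j = k})"
    unfolding card power_add prod.distrib ..
  finally show ?case .
qed

lemma sum_card_fibres:
  fixes g :: "nat \<Rightarrow> nat"
  shows "(\<Sum>k<K. card {j\<in>{..<m}. g j = k}) = card {j\<in>{..<m}. g j < K}"
proof (induction K)
  case 0
  then show ?case by simp
next
  case (Suc K)
  have "{j\<in>{..<m}. g j < Suc K} = {j\<in>{..<m}. g j < K} \<union> {j\<in>{..<m}. g j = K}" by auto
  moreover have "card ({j\<in>{..<m}. g j < K} \<union> {j\<in>{..<m}. g j = K}) =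
     card {j\<in>{..<m}. g j < K} + card {j\<in>{..<m}. g j = K}"
    by (rule card_Un_disjoint) auto
  ultimately show ?case using Suc by simp
qed

section \<open>A uniform threshold by compactness of the unitary group\<close>

definition tail_mass :: "nat \<Rightarrow> (nat \<Rightarrow> nat \<Rightarrow> complex) \<Rightarrow> (nat \<Rightarrow> complex) \<Rightarrow> nat \<Rightarrow> real" where
  "tail_mass N u x K = (\<Sum>s\<in>{K..<N}. (cmod (cinner N (u s) x))\<^sup>2)"

lemma tail_mass_nonneg: "0 \<le> tail_mass N u x K"
  unfolding tail_mass_def by (intro sum_nonneg) auto

lemma tail_mass_zero_iff:
  "tail_mass N u x K = 0 \<longleftrightarrow> (\<forall>s. K \<le> s \<longrightarrow> s < N \<longrightarrow> cinner N (u s) x = 0)"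
  unfolding tail_mass_def by (subst sum_nonneg_eq_0_iff) auto

lemma orthonormal_basis_parseval:
  assumes "orthonormal_basis N u"
  shows "tail_mass N u x 0 = (\<Sum>i<N. (cmod (x i))\<^sup>2)"
proof -
  have "cinner N x x = cinner N x (\<lambda>i. \<Sum>s<N. cinner N (u s) x * u s i)"
    using orthonormal_basis_expansion[OF assms] by (intro cinner_cong_right) blast
  also have "\<dots> = (\<Sum>s<N. cinner N (u s) x * cnj (cinner N (u s) x))"
    unfolding cinner_lincomb_right by (simp add: cinner_commute[of N x])
  also have "\<dots> = complex_of_real (tail_mass N u x 0)"
    unfolding tail_mass_def of_real_sum atLeast0LessThan
    by (intro sum.cong refl) (simp add: complex_norm_square[symmetric])
  finally show ?thesis unfolding cinner_self of_real_eq_iff by simp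
qed

lemma orthonormal_basis_entry_bound:
  assumes "orthonormal_basis N u" "s < N" "i < N"
  shows "cmod (u s i) \<le> 1"
proof -
  have "cinner N (u s) (u s) = 1" using assms unfolding orthonormal_basis_def orthonormal_def by simp
  then have "(\<Sum>i<N. (cmod (u s i))\<^sup>2) = 1" unfolding cinner_self by (metis of_real_eq_1_iff)
  moreover have "(cmod (u s i))\<^sup>2 \<le> (\<Sum>i<N. (cmod (u s i))\<^sup>2)"
    using assms(3) by (intro member_le_sum) auto
  ultimately show ?thesis by (simp add: power_le_one_iff abs_square_le_1)
qed

lemma bounded_family_convergent_subseq:
  fixes f :: "nat \<Rightarrow> 'b \<Rightarrow> complex"
  assumes "finite I" and "\<forall>k. \<forall>x\<in>I. cmod (f k x) \<le> B"
  shows "\<exists>r l. strict_mono r \<and> (\<forall>x\<in>I. (\<lambda>k. f (r k) x) \<longlonglongrightarrow> l x)"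
  using assms
proof (induction I rule: finite_induct)
  case empty
  show ?case by (rule exI[of _ id]) (auto simp: strict_mono_def)
next
  case (insert a I)
  then obtain r l where r: "strict_mono r" and l: "\<forall>x\<in>I. (\<lambda>k. f (r k) x) \<longlonglongrightarrow> l x" by auto
  have "bounded (range (\<lambda>k. f (r k) a))"
    using insert.prems by (intro boundedI[of _ B]) auto
  then obtain l' r' where r': "strict_mono r'" and l': "((\<lambda>k. f (r k) a) \<circ> r') \<longlonglongrightarrow> l'"
    using bounded_imp_convergent_subsequence by blast
  have "(\<lambda>k. f ((r \<circ> r') k) x) \<longlonglongrightarrow> (l(a := l')) x" if x: "x \<in> insert a I" for x
  proof (cases "x = a")
    case True
    then show ?thesis using l' by (simp add: o_def)
  next
    case False
    then have "((\<lambda>k. f (r k) x) \<circ> r') \<longlonglongrightarrow> l x" using x l r' LIMSEQ_subseq_LIMSEQ by auto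
    then show ?thesis using False by (simp add: o_def)
  qed
  with strict_mono_o[OF r r'] show ?case by blast
qed

lemma orthonormal_basis_limit:
  assumes ob: "\<And>k. orthonormal_basis N (us k)"
    and lim: "\<forall>s<N. \<forall>i<N. (\<lambda>k. us k s i) \<longlonglongrightarrow> u s i"
  shows "orthonormal_basis N u"
  unfolding orthonormal_basis_def orthonormal_def cinner_def
proof (intro conjI allI impI)
  fix a b assume "a < N" "b < N"
  with lim have "(\<lambda>k. \<Sum>i<N. cnj (us k a i) * us k b i) \<longlonglongrightarrow> (\<Sum>i<N. cnj (u a i) * u b i)"
    by (intro tendsto_sum tendsto_mult tendsto_cnj) auto
  moreover have "(\<lambda>k. \<Sum>i<N. cnj (us k a i) * us k b i) = (\<lambda>k. if a = b then 1 else 0)"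
    using ob \<open>a < N\<close> \<open>b < N\<close> unfolding orthonormal_basis_def orthonormal_def cinner_def by auto
  ultimately have "(\<lambda>k. if a = b then 1 else 0) \<longlonglongrightarrow> (\<Sum>i<N. cnj (u a i) * u b i)"
    by simp
  from LIMSEQ_unique[OF tendsto_const this] show "(\<Sum>i<N. cnj (u a i) * u b i) = (if a = b then 1 else 0)"
    by simp
next
  fix i i' assume "i < N" "i' < N"
  with lim have "(\<lambda>k. \<Sum>s<N. us k s i * cnj (us k s i')) \<longlonglongrightarrow> (\<Sum>s<N. u s i * cnj (u s i'))"
    by (intro tendsto_sum tendsto_mult tendsto_cnj) auto
  moreover have "(\<lambda>k. \<Sum>s<N. us k s i * cnj (us k s i')) = (\<lambda>k. if i = i' then 1 else 0)"
    using ob \<open>i < N\<close> \<open>i' < N\<close> unfolding orthonormal_basis_def by auto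
  ultimately have "(\<lambda>k. if i = i' then 1 else 0) \<longlonglongrightarrow> (\<Sum>s<N. u s i * cnj (u s i'))"
    by simp
  from LIMSEQ_unique[OF tendsto_const this] show "(\<Sum>s<N. u s i * cnj (u s i')) = (if i = i' then 1 else 0)"
    by simp
qed

lemma orthonormal_basis_convergent_subseq:
  fixes us :: "nat \<Rightarrow> nat \<Rightarrow> nat \<Rightarrow> complex"
  assumes ob: "\<And>k. orthonormal_basis N (us k)"
  obtains r u where "strict_mono r" "orthonormal_basis N u"
    "\<forall>s<N. \<forall>i<N. (\<lambda>k. us (r k) s i) \<longlonglongrightarrow> u s i"
proof -
  have "\<forall>k. \<forall>x\<in>{..<N}\<times>{..<N}. cmod ((\<lambda>(s, i). us k s i) x) \<le> 1"
    using orthonormal_basis_entry_bound[OF ob] by auto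
  then obtain r l where r: "strict_mono r"
    and l: "\<forall>x\<in>{..<N}\<times>{..<N}. (\<lambda>k. (\<lambda>(s, i). us (r k) s i) x) \<longlonglongrightarrow> l x"
    using bounded_family_convergent_subseq[of "{..<N}\<times>{..<N}" "\<lambda>k (s, i). us k s i" "1::real"] by auto
  have lim: "\<forall>s<N. \<forall>i<N. (\<lambda>k. us (r k) s i) \<longlonglongrightarrow> l (s, i)"
    using l by auto
  show thesis
    by (rule that[OF r orthonormal_basis_limit[OF ob lim]]) (use lim in auto)
qed

lemma tail_mass_tendsto:
  assumes "\<forall>s<N. \<forall>i<N. (\<lambda>k. us k s i) \<longlonglongrightarrow> u s i"
  shows "(\<lambda>k. tail_mass N (us k) x K) \<longlonglongrightarrow> tail_mass N u x K"
  unfolding tail_mass_def cinner_def using assms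
  by (intro tendsto_sum tendsto_power tendsto_norm tendsto_mult tendsto_cnj tendsto_const) auto

lemma card_le_phi_of_tail_mass_zero:
  assumes ob: "orthonormal_basis (Suc n) u" and K: "0 < K" "K \<le> Suc n"
    and T: "T \<subseteq> {..<m}" and carr: "\<forall>j\<in>T. P j \<in> carrier_vec (n+1)"
    and zero: "\<forall>j\<in>T. tail_mass (Suc n) u (\<lambda>i. P j $ i) K = 0"
  shows "card T \<le> phi n m P (int (K - 1))"
proof -
  let ?N = "Suc n"
  define w where "w = (\<lambda>l. Matrix.vec ?N (u l))"
  have Kset: "{..K-1} = {..<K}" using K by auto
  define L where "L = span_family n (K-1) w"
  have PL: "P j \<in> L" if j: "j \<in> T" for j
  proof -
    have "\<forall>i<n+1. P j $ i = (\<Sum>l\<le>K-1. cinner ?N (u l) (\<lambda>i. P j $ i) * w l $ i)"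
    proof (intro allI impI)
      fix i assume i: "i < n+1"
      have "P j $ i = (\<Sum>s<?N. cinner ?N (u s) (\<lambda>i. P j $ i) * u s i)"
        using orthonormal_basis_expansion[OF ob, of i "\<lambda>i. P j $ i"] i by simp
      also have "\<dots> = (\<Sum>s<K. cinner ?N (u s) (\<lambda>i. P j $ i) * u s i)"
        using K zero j unfolding tail_mass_zero_iff by (intro sum.mono_neutral_right) auto
      also have "\<dots> = (\<Sum>l\<le>K-1. cinner ?N (u l) (\<lambda>i. P j $ i) * w l $ i)"
        unfolding Kset w_def using i by (intro sum.cong) auto
      finally show "P j $ i = (\<Sum>l\<le>K-1. cinner ?N (u l) (\<lambda>i. P j $ i) * w l $ i)" .
    qed
    then show "P j \<in> L" unfolding L_def span_family_def mem_Collect_eq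
      using carr j by (intro conjI exI[of _ "\<lambda>l. cinner ?N (u l) (\<lambda>i. P j $ i)"]) auto
  qed
  have "lin_indep_family n (K-1) w"
    unfolding lin_indep_family_def
  proof (intro allI impI)
    fix c :: "nat \<Rightarrow> complex" and l'
    assume h0: "\<forall>i<n+1. (\<Sum>l\<le>K-1. c l * w l $ i) = 0" and l': "l' \<le> K-1"
    have h: "\<forall>i<?N. (\<Sum>l<K. c l * u l i) = 0"
      using h0 unfolding Kset w_def by (auto cong: sum.cong)
    have "0 = cinner ?N (u l') (\<lambda>i. \<Sum>l<K. c l * u l i)"
      using h unfolding cinner_def by simp
    also have "\<dots> = (\<Sum>l<K. c l * (if l' = l then 1 else 0))"
      unfolding cinner_lincomb_right using ob K l'
      unfolding orthonormal_basis_def orthonormal_def by (intro sum.cong) auto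
    also have "\<dots> = c l'" using l' K by (simp add: if_distrib cong: if_cong)
    finally show "c l' = 0" by simp
  qed
  then have "proj_subspace n (K-1) L"
    unfolding proj_subspace_def L_def by (intro exI[of _ w]) (auto simp: w_def)
  then have "card {j \<in> {..<m}. P j \<in> L} \<le> phi n m P (int (K-1))" by (rule card_le_phi)
  moreover have "card T \<le> card {j \<in> {..<m}. P j \<in> L}" using T PL by (intro card_mono) auto
  ultimately show ?thesis by simp
qed

lemma tail_mass_uniform_lower_bound:
  assumes K: "0 < K" "K \<le> Suc n" and T: "T \<subseteq> {..<m}" and carr: "\<forall>j<m. P j \<in> carrier_vec (n+1)"
    and big: "phi n m P (int (K - 1)) < card T"
  shows "\<exists>\<delta>>0. \<forall>u. orthonormal_basis (Suc n) u \<longrightarrow> (\<exists>j\<in>T. \<delta> \<le> tail_mass (Suc n) u (\<lambda>i. P j $ i) K)"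
proof (rule ccontr)
  let ?N = "Suc n"
  assume "\<not> ?thesis"
  then have "\<forall>k. \<exists>u. orthonormal_basis ?N u \<and> (\<forall>j\<in>T. tail_mass ?N u (\<lambda>i. P j $ i) K < inverse (Suc k))"
    by (metis not_le of_nat_0_less_iff positive_imp_inverse_positive zero_less_Suc)
  then obtain us where ob: "\<And>k. orthonormal_basis ?N (us k)"
    and small: "\<And>k j. j \<in> T \<Longrightarrow> tail_mass ?N (us k) (\<lambda>i. P j $ i) K < inverse (Suc k)"
    by metis
  obtain r u where r: "strict_mono r" and ob_u: "orthonormal_basis ?N u"
    and lim: "\<forall>s<?N. \<forall>i<?N. (\<lambda>k. us (r k) s i) \<longlonglongrightarrow> u s i"
    by (rule orthonormal_basis_convergent_subseq[OF ob])
  have "tail_mass ?N u (\<lambda>i. P j $ i) K = 0" if j: "j \<in> T" for j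
  proof -
    have "tail_mass ?N u (\<lambda>i. P j $ i) K \<le> 0"
    proof (rule LIMSEQ_le)
      show "(\<lambda>k. tail_mass ?N (us (r k)) (\<lambda>i. P j $ i) K) \<longlonglongrightarrow> tail_mass ?N u (\<lambda>i. P j $ i) K"
        by (rule tail_mass_tendsto[OF lim])
      show "(\<lambda>k. inverse (real (Suc k))) \<longlonglongrightarrow> 0" by (rule LIMSEQ_inverse_real_of_nat)
      have "tail_mass ?N (us (r k)) (\<lambda>i. P j $ i) K \<le> inverse (real (Suc k))" for k
      proof -
        have "inverse (real (Suc (r k))) \<le> inverse (real (Suc k))"
          using seq_suble[OF r, of k] by (intro le_imp_inverse_le) auto
        with small[OF j, of "r k"] show ?thesis by linarith
      qed
      then show "\<exists>N. \<forall>k\<ge>N. tail_mass ?N (us (r k)) (\<lambda>i. P j $ i) K \<le> inverse (real (Suc k))"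
        by blast
    qed
    with tail_mass_nonneg show ?thesis by (rule antisym[rotated])
  qed
  then have "card T \<le> phi n m P (int (K - 1))"
    using card_le_phi_of_tail_mass_zero[OF ob_u K T, of P] carr T by blast
  with big show False by simp
qed

text \<open>Only finitely many pairs \<open>(K, T)\<close> occur, so one threshold \<open>\<delta>\<close> serves them all.\<close>

lemma uniform_tail_threshold:
  assumes carr: "\<forall>j<m. P j \<in> carrier_vec (n+1)"
  obtains \<delta> :: real where "0 < \<delta>" "\<delta> \<le> 1"
    "\<And>u K. orthonormal_basis (Suc n) u \<Longrightarrow> 0 < K \<Longrightarrow> K \<le> n \<Longrightarrow>
       card {j\<in>{..<m}. tail_mass (Suc n) u (\<lambda>i. P j $ i) K < \<delta>} \<le> phi n m P (int (K - 1))"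
proof -
  define S where "S = {(K, T). 0 < K \<and> K \<le> n \<and> T \<subseteq> {..<m} \<and> phi n m P (int (K - 1)) < card T}"
  have "S \<subseteq> {..n} \<times> Pow {..<m}" unfolding S_def by auto
  then have finS: "finite S" by (rule finite_subset) auto
  define good where "good = (\<lambda>\<delta> (K, T). \<forall>u. orthonormal_basis (Suc n) u \<longrightarrow>
    (\<exists>j\<in>T. \<delta> \<le> tail_mass (Suc n) u (\<lambda>i. P j $ i) K))"
  have "eventually (\<lambda>\<delta>. good \<delta> p) (at_right (0::real))" if p: "p \<in> S" for p
  proof -
    obtain K T where pKT: "p = (K, T)" by (cases p)
    then have "0 < K" "K \<le> Suc n" "T \<subseteq> {..<m}" "phi n m P (int (K - 1)) < card T"
      using p unfolding S_def by auto
    from tail_mass_uniform_lower_bound[OF this(1-3) carr this(4)] obtain \<delta>0 where "\<delta>0 > 0"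
      and "\<forall>u. orthonormal_basis (Suc n) u \<longrightarrow> (\<exists>j\<in>T. \<delta>0 \<le> tail_mass (Suc n) u (\<lambda>i. P j $ i) K)"
      by blast
    then show ?thesis
      unfolding eventually_at_right_field pKT good_def by (force intro!: exI[of _ \<delta>0])
  qed
  then have "eventually (\<lambda>\<delta>. \<forall>p\<in>S. good \<delta> p) (at_right (0::real))"
    by (rule eventually_ball_finite[OF finS, rule_format])
  then obtain b where b: "(0::real) < b" and bgood: "\<And>\<delta>. 0 < \<delta> \<Longrightarrow> \<delta> < b \<Longrightarrow> \<forall>p\<in>S. good \<delta> p"
    unfolding eventually_at_right_field by blast
  define \<delta> where "\<delta> = min (b/2) 1"
  have \<delta>: "0 < \<delta>" "\<delta> \<le> 1" "\<delta> < b" using b unfolding \<delta>_def by auto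
  show thesis
  proof (rule that[OF \<delta>(1,2)])
    fix u K assume ob: "orthonormal_basis (Suc n) u" and K: "0 < K" "K \<le> n"
    define T where "T = {j\<in>{..<m}. tail_mass (Suc n) u (\<lambda>i. P j $ i) K < \<delta>}"
    show "card T \<le> phi n m P (int (K - 1))"
    proof (rule ccontr)
      assume "\<not> ?thesis"
      then have "(K, T) \<in> S" unfolding S_def T_def using K by auto
      with bgood[OF \<delta>(1,3)] ob obtain j where "j \<in> T" "\<delta> \<le> tail_mass (Suc n) u (\<lambda>i. P j $ i) K"
        unfolding good_def by fastforce
      then show False unfolding T_def by simp
    qed
  qed
qed

section \<open>The product estimate\<close>

lemma weighted_mass_ge_tail_mass:
  fixes lam :: "nat \<Rightarrow> real"
  assumes pos: "\<forall>k<N. 0 \<le> lam k" and mono: "\<forall>k l. k \<le> l \<longrightarrow> l < N \<longrightarrow> lam k \<le> lam l"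
    and K: "K < N"
  shows "lam K * tail_mass N u x K \<le> (\<Sum>s<N. lam s * (cmod (cinner N (u s) x))\<^sup>2)"
proof -
  let ?c = "\<lambda>s. (cmod (cinner N (u s) x))\<^sup>2"
  have "lam K * tail_mass N u x K = (\<Sum>s\<in>{K..<N}. lam K * ?c s)"
    unfolding tail_mass_def by (rule sum_distrib_left)
  also have "\<dots> \<le> (\<Sum>s\<in>{K..<N}. lam s * ?c s)"
    using mono by (intro sum_mono mult_right_mono) auto
  also have "\<dots> \<le> (\<Sum>s<N. lam s * ?c s)"
    using pos by (intro sum_mono2) auto
  finally show ?thesis .
qed

lemma exists_last_index:
  fixes R :: "nat \<Rightarrow> bool"
  assumes "R 0"
  shows "\<exists>k\<le>n. R k \<and> (\<forall>k'. k < k' \<longrightarrow> k' \<le> n \<longrightarrow> \<not> R k')"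
proof -
  define k where "k = Max {k. k \<le> n \<and> R k}"
  have fin: "finite {k. k \<le> n \<and> R k}" by simp
  have "k \<in> {k. k \<le> n \<and> R k}" unfolding k_def using assms by (intro Max_in[OF fin]) auto
  moreover have "k' \<le> k" if "k' \<le> n" "R k'" for k'
    unfolding k_def using that by (intro Max_ge[OF fin]) auto
  ultimately show ?thesis by (intro exI[of _ k]) force
qed

lemma prod_phi_power_le:
  fixes lam :: "nat \<Rightarrow> real" and \<sigma> :: "nat \<Rightarrow> nat"
  assumes carr: "\<forall>j<m. P j \<in> carrier_vec (n+1)"
    and pos: "\<forall>k\<le>n. 0 < lam k" and mono: "\<forall>k l. k \<le> l \<longrightarrow> l \<le> n \<longrightarrow> lam k \<le> lam l"
    and \<sigma>: "\<forall>j<m. \<sigma> j \<le> n"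
    and count: "\<And>K. 0 < K \<Longrightarrow> K \<le> n \<Longrightarrow> card {j\<in>{..<m}. \<sigma> j < K} \<le> phi n m P (int (K - 1))"
  shows "(\<Prod>k\<le>n. lam k ^ (phi n m P (int k) - phi n m P (int k - 1))) \<le> (\<Prod>j<m. lam (\<sigma> j))"
proof -
  let ?N = "Suc n"
  define a where "a = (\<lambda>k. card {j\<in>{..<m}. \<sigma> j = k})"
  define b where "b = (\<lambda>k. phi n m P (int k) - phi n m P (int k - 1))"
  have suma: "(\<Sum>k<K. a k) = card {j\<in>{..<m}. \<sigma> j < K}" for K
    unfolding a_def by (rule sum_card_fibres)
  have sumb: "K \<le> ?N \<Longrightarrow> (\<Sum>k<K. b k) = (if K = 0 then 0 else phi n m P (int (K - 1)))" for K
    unfolding b_def by (rule phi_telescope)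
  have all: "{j\<in>{..<m}. \<sigma> j < ?N} = {..<m}" using \<sigma> by auto
  have partial: "(\<Sum>k<K. a k) \<le> (\<Sum>k<K. b k)" if K: "K \<le> ?N" for K
  proof -
    consider "K = 0" | "K = ?N" | "0 < K" "K \<le> n" using K by linarith
    then show ?thesis
    proof cases
      case 2
      then show ?thesis using suma[of K] sumb[OF K] all phi_ambient[OF carr] by simp
    next
      case 3
      then show ?thesis using suma[of K] sumb[OF K] count by simp
    qed simp
  qed
  have "(\<Prod>k<?N. lam k ^ b k) \<le> (\<Prod>k<?N. lam k ^ a k)"
  proof (rule prod_power_le_of_partial_sums)
    show "\<forall>k<?N. 0 < lam k" "\<forall>k<?N. \<forall>l<?N. k \<le> l \<longrightarrow> lam k \<le> lam l"
      using pos mono by auto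
    show "\<forall>K\<le>?N. (\<Sum>k<K. a k) \<le> (\<Sum>k<K. b k)" using partial by blast
    show "(\<Sum>k<?N. a k) = (\<Sum>k<?N. b k)" using suma[of ?N] sumb[of ?N] all phi_ambient[OF carr] by simp
  qed
  also have "\<dots> = (\<Prod>j<m. lam (\<sigma> j))"
    unfolding a_def using prod_eq_prod_power_card_fibres[of m \<sigma> ?N lam] \<sigma> by (simp add: less_Suc_eq_le)
  finally show ?thesis unfolding b_def lessThan_Suc_atMost .
qed

lemma cluster_product_lower_bound:
  fixes lam :: "nat \<Rightarrow> real" and \<delta> :: real
  assumes carr: "\<forall>j<m. P j \<in> carrier_vec (n+1)"
    and unit: "\<forall>j<m. tail_mass (Suc n) u (\<lambda>i. P j $ i) 0 = 1"
    and pos: "\<forall>k\<le>n. 0 < lam k" and mono: "\<forall>k l. k \<le> l \<longrightarrow> l \<le> n \<longrightarrow> lam k \<le> lam l"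
    and \<delta>: "0 < \<delta>" "\<delta> \<le> 1"
    and threshold: "\<And>K. 0 < K \<Longrightarrow> K \<le> n \<Longrightarrow>
       card {j\<in>{..<m}. tail_mass (Suc n) u (\<lambda>i. P j $ i) K < \<delta>} \<le> phi n m P (int (K - 1))"
  shows "\<delta> ^ m * (\<Prod>k\<le>n. lam k ^ (phi n m P (int k) - phi n m P (int k - 1))) \<le>
    (\<Prod>j<m. \<Sum>s<Suc n. lam s * (cmod (cinner (Suc n) (u s) (\<lambda>i. P j $ i)))\<^sup>2)"
proof -
  let ?t = "\<lambda>j K. tail_mass (Suc n) u (\<lambda>i. P j $ i) K"
  let ?h = "\<lambda>j. \<Sum>s<Suc n. lam s * (cmod (cinner (Suc n) (u s) (\<lambda>i. P j $ i)))\<^sup>2"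
  have "\<forall>j. \<exists>k. j < m \<longrightarrow> k \<le> n \<and> \<delta> \<le> ?t j k \<and> (\<forall>k'. k < k' \<longrightarrow> k' \<le> n \<longrightarrow> ?t j k' < \<delta>)"
  proof (intro allI)
    fix j
    show "\<exists>k. j < m \<longrightarrow> k \<le> n \<and> \<delta> \<le> ?t j k \<and> (\<forall>k'. k < k' \<longrightarrow> k' \<le> n \<longrightarrow> ?t j k' < \<delta>)"
    proof (cases "j < m")
      case True
      with unit \<delta> have "\<delta> \<le> ?t j 0" by simp
      then have "\<exists>k\<le>n. \<delta> \<le> ?t j k \<and> (\<forall>k'. k < k' \<longrightarrow> k' \<le> n \<longrightarrow> \<not> \<delta> \<le> ?t j k')"
        by (rule exists_last_index)
      then show ?thesis by (auto simp: not_le)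
    qed simp
  qed
  then obtain \<sigma> where \<sigma>n: "\<forall>j<m. \<sigma> j \<le> n" and \<sigma>t: "\<forall>j<m. \<delta> \<le> ?t j (\<sigma> j)"
    and \<sigma>last: "\<forall>j<m. \<forall>k'. \<sigma> j < k' \<longrightarrow> k' \<le> n \<longrightarrow> ?t j k' < \<delta>"
    by metis
  have count: "card {j\<in>{..<m}. \<sigma> j < K} \<le> phi n m P (int (K - 1))" if "0 < K" "K \<le> n" for K
  proof -
    have "card {j\<in>{..<m}. \<sigma> j < K} \<le> card {j\<in>{..<m}. ?t j K < \<delta>}"
      using \<sigma>last that by (intro card_mono) auto
    also have "\<dots> \<le> phi n m P (int (K - 1))" by (rule threshold[OF that])
    finally show ?thesis .
  qed
  have "\<delta> ^ m * (\<Prod>k\<le>n. lam k ^ (phi n m P (int k) - phi n m P (int k - 1))) \<le>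
      \<delta> ^ m * (\<Prod>j<m. lam (\<sigma> j))"
    using prod_phi_power_le[OF carr pos mono \<sigma>n count] \<delta> by simp
  also have "\<dots> = (\<Prod>j<m. lam (\<sigma> j) * \<delta>)"
    by (simp add: prod.distrib mult.commute)
  also have "\<dots> \<le> (\<Prod>j<m. lam (\<sigma> j) * ?t j (\<sigma> j))"
    using pos \<sigma>n \<sigma>t \<delta> by (intro prod_mono) (auto intro: mult_left_mono)
  also have "\<dots> \<le> (\<Prod>j<m. ?h j)"
  proof (rule prod_mono)
    fix j assume "j \<in> {..<m}"
    with \<sigma>n pos have "0 \<le> lam (\<sigma> j) * ?t j (\<sigma> j)"
      by (intro mult_nonneg_nonneg tail_mass_nonneg) (auto intro: less_imp_le)
    moreover have "lam (\<sigma> j) * ?t j (\<sigma> j) \<le> ?h j"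
      using pos mono \<sigma>n \<open>j \<in> {..<m}\<close>
      by (intro weighted_mass_ge_tail_mass) (auto simp: less_Suc_eq_le)
    ultimately show "0 \<le> lam (\<sigma> j) * ?t j (\<sigma> j) \<and> lam (\<sigma> j) * ?t j (\<sigma> j) \<le> ?h j" by blast
  qed
  finally show ?thesis .
qed

lemma herm_form_product_lower_bound:
  fixes P :: "nat \<Rightarrow> complex vec" and lam :: "nat \<Rightarrow> real" and \<delta> :: real
  assumes carr: "\<forall>j<m. P j \<in> carrier_vec (n+1)"
    and norm: "\<forall>j<m. (\<Sum>i<n+1. cnj (P j $ i) * P j $ i) = 1"
    and \<delta>: "0 < \<delta>" "\<delta> \<le> 1"
    and threshold: "\<And>u K. orthonormal_basis (Suc n) u \<Longrightarrow> 0 < K \<Longrightarrow> K \<le> n \<Longrightarrow>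
      card {j\<in>{..<m}. tail_mass (Suc n) u (\<lambda>i. P j $ i) K < \<delta>} \<le> phi n m P (int (K - 1))"
    and Q: "Q \<in> carrier_mat (n+1) (n+1)" and herm: "hermitian_mat Q"
    and cp: "char_poly Q = (\<Prod>k\<le>n. [:- complex_of_real (lam k), 1:])"
    and lam0: "0 < lam 0" and lam_step: "\<forall>k<n. lam k \<le> lam (Suc k)"
  shows "complex_of_real (\<delta> ^ m * (\<Prod>k\<le>n. lam k ^ (phi n m P (int k) - phi n m P (int k - 1))))
    \<le> (\<Prod>j<m. herm_form n Q (P j))"
proof -
  obtain u where ob: "orthonormal_basis (Suc n) u"
    and eig: "\<And>k i. k < Suc n \<Longrightarrow> i < Suc n \<Longrightarrow> mat_apply (Suc n) Q (u k) i = complex_of_real (lam k) * u k i"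
    using hermitian_orthonormal_eigenbasis[of Q "Suc n" "\<lambda>k. complex_of_real (lam k)"] Q herm cp
    by (auto simp: lessThan_Suc_atMost)
  have mono: "\<forall>k l. k \<le> l \<longrightarrow> l \<le> n \<longrightarrow> lam k \<le> lam l"
    using lam_step by (auto intro: lift_Suc_mono_le_ivl[of "{..<n}"])
  have pos: "\<forall>k\<le>n. 0 < lam k"
    using lam0 mono by (meson le0 less_le_trans)
  have unit: "\<forall>j<m. tail_mass (Suc n) u (\<lambda>i. P j $ i) 0 = 1"
  proof (intro allI impI)
    fix j assume "j < m"
    with norm have "cinner (Suc n) (\<lambda>i. P j $ i) (\<lambda>i. P j $ i) = 1"
      unfolding cinner_def by simp
    then show "tail_mass (Suc n) u (\<lambda>i. P j $ i) 0 = 1"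
      unfolding cinner_self orthonormal_basis_parseval[OF ob] of_real_eq_1_iff .
  qed
  let ?h = "\<lambda>j. \<Sum>s<Suc n. lam s * (cmod (cinner (Suc n) (u s) (\<lambda>i. P j $ i)))\<^sup>2"
  have "herm_form n Q (P j) = complex_of_real (?h j)" for j
    unfolding herm_form_def using hermitian_form_eigen_expansion[OF ob eig] by simp
  then have eq: "(\<Prod>j<m. herm_form n Q (P j)) = complex_of_real (\<Prod>j<m. ?h j)"
    by (simp add: of_real_prod)
  have le: "\<delta> ^ m * (\<Prod>k\<le>n. lam k ^ (phi n m P (int k) - phi n m P (int k - 1))) \<le> (\<Prod>j<m. ?h j)"
    by (rule cluster_product_lower_bound[OF carr unit pos mono \<delta> threshold[OF ob]])
  have of_real_mono: "complex_of_real x \<le> complex_of_real y" if "x \<le> y" for x y :: real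
    using that by (simp add: less_eq_complex_def)
  show ?thesis unfolding eq by (rule of_real_mono[OF le])
qed

theorem mainTheorem1:
  fixes n m :: nat and P :: "nat \<Rightarrow> complex vec"
  assumes "\<forall>j<m. P j \<in> carrier_vec (n+1)"
    and "\<forall>j<m. (\<Sum>i<n+1. cnj (P j $ i) * P j $ i) = 1"
  shows "\<exists>c :: real. c > 0 \<and>
    (\<forall>(Q :: complex mat) (lam :: nat \<Rightarrow> real).
       Q \<in> carrier_mat (n+1) (n+1) \<longrightarrow> hermitian_mat Q \<longrightarrow> pos_def_mat n Q \<longrightarrow>
       char_poly Q = (\<Prod>k\<le>n. [:- complex_of_real (lam k), 1:]) \<longrightarrow>
       0 < lam 0 \<longrightarrow> (\<forall>k<n. lam k \<le> lam (Suc k)) \<longrightarrow>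
       (\<Prod>j<m. herm_form n Q (P j)) \<ge>
         complex_of_real (c * (\<Prod>k\<le>n. lam k ^ (phi n m P (int k) - phi n m P (int k - 1)))))"
proof -
  obtain \<delta> :: real where \<delta>: "0 < \<delta>" "\<delta> \<le> 1" and threshold: "\<And>u K. orthonormal_basis (Suc n) u \<Longrightarrow>
      0 < K \<Longrightarrow> K \<le> n \<Longrightarrow>
      card {j\<in>{..<m}. tail_mass (Suc n) u (\<lambda>i. P j $ i) K < \<delta>} \<le> phi n m P (int (K - 1))"
    using uniform_tail_threshold[OF assms(1)] by blast
  show ?thesis
    using herm_form_product_lower_bound[OF assms \<delta> threshold] \<delta>
    by (intro exI[of _ "\<delta> ^ m"]) auto
qed

end
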